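(* Let $n\ge0$ be an integer which cannot be written as $P_1+2P_2$ with $P_1,P_2$ (generalized) pentagonal numbers. Then $$b^{4}_{3,4}(16n+3)\equiv 0\pmod 8\quad\text{and}\quad b^{4}_{3,4}(48n+7)\equiv 0\pmod 8.$$
   Context: For integers $r\ge1$ write $f_r=\prod_{j\ge1}(1-q^{rj})$. $b^{4}_{3,4}(n)$ is the number of $4$-colored partitions of $n$ into parts not divisible by $3$ or $4$, i.e. $\sum_{n\ge0}b^4_{3,4}(n)q^n=\dfrac{f_3^4f_4^4}{f_1^4f_{12}^4}$. A (generalized) pentagonal number is an integer of the form $k(3k-1)/2$ with $k\in\mathbb{Z}$. *)

theory Defs
  imports Main "HOL-Library.Multiset"
begin

text \<open>A 4-colored partition of n into parts not divisible by 3 or 4 is a finite multiset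
  of pairs (part, colour) with part \<ge> 1, 3 and 4 not dividing the part, colour in {0,1,2,3},
  whose parts sum to n.  b4_34 n counts them.\<close>

definition b4_34 :: "nat \<Rightarrow> nat" where
  "b4_34 n = card {M :: (nat \<times> nat) multiset.
      (\<forall>x \<in># M. 0 < fst x \<and> \<not> 3 dvd fst x \<and> \<not> 4 dvd fst x \<and> snd x < 4) \<and>
      sum_mset (image_mset fst M) = n}"

definition pentagonal :: "int \<Rightarrow> bool" where
  "pentagonal p \<longleftrightarrow> (\<exists>k::int. p = k * (3 * k - 1) div 2)"

end

(*
  b4_34 n is the coefficient of q^n in H^4, where H = f3 f4 / (f1 f12) is the product of
  1 / (1 - q^m) over the m not divisible by 3 or 4. If E and Q are the even and odd parts of H,
  then in odd degrees H^4 agrees with 4 (E^3 Q + E Q^3), so 8 divides b4_34 n for odd n as soon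
  as the coefficient of E Q (E + Q)^2 vanishes modulo 2.

  Modulo 2 we have f4 = f1^4, f6 = f3^2 and Jacobi's identity f1^3 = psi(q), the sum of q^T over
  the triangular numbers T. Together with psi(q) psi(q^3) = psi(q^4) + q psi(q^12), which comes
  from an involution on the representations of 4(2n + 1) by x^2 + 3y^2, this gives
  H f6 f12 = psi(q^4) + q psi(q^12), whose two terms are E f6 f12 and Q f6 f12. Hence
  E Q H^2 = q a(q^4) + q^3 psi(q^16) + q^7 psi(q^48), and its coefficients at 16n + 3 and 48n + 7
  are the coefficient of q^n in psi. This vanishes unless n is triangular, and t(t + 1)/2 is
  P1 + 2 P2 because 3 (2t + 1)^2 = X^2 + 2 Y^2 with X, Y prime to 6, and (X^2 - 1)/24 is pentagonal.
*)

theory Submission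
  imports Defs "HOL-Computational_Algebra.Formal_Laurent_Series" "HOL-Library.Z2" "HOL-Library.Disjoint_Sets"
begin

unbundle fps_syntax

(* this simproc turns equations between power series into equations between polynomials,
   which the proofs below do not want *)
declare [[simproc del: poly_fps_eq]]

section \<open>Truncation, substitution and infinite products\<close>

definition eq_upto :: "nat \<Rightarrow> 'a::zero fps \<Rightarrow> 'a fps \<Rightarrow> bool" where
  "eq_upto N a b \<longleftrightarrow> (\<forall>i\<le>N. a $ i = b $ i)"

lemma eq_upto_refl [simp]: "eq_upto N a a"
  by (simp add: eq_upto_def)

lemma eq_upto_sym: "eq_upto N a b \<Longrightarrow> eq_upto N b a"
  by (auto simp: eq_upto_def)

lemma eq_upto_trans [trans]: "eq_upto N a b \<Longrightarrow> eq_upto N b c \<Longrightarrow> eq_upto N a c"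
  by (simp add: eq_upto_def)

lemma eq_upto_mono: "eq_upto N a b \<Longrightarrow> M \<le> N \<Longrightarrow> eq_upto M a b"
  by (simp add: eq_upto_def)

lemma fps_eq_if_eq_upto: "(\<And>N. eq_upto N a b) \<Longrightarrow> a = b"
  by (rule fps_ext) (auto simp: eq_upto_def)

lemma eq_upto_sum:
  fixes f g :: "'b \<Rightarrow> 'a::comm_monoid_add fps"
  shows "(\<And>k. k \<in> A \<Longrightarrow> eq_upto N (f k) (g k)) \<Longrightarrow> eq_upto N (sum f A) (sum g A)"
  by (auto simp: eq_upto_def fps_sum_nth intro!: sum.cong)

lemma eq_upto_mult:
  fixes a b c d :: "'a::comm_semiring_1 fps"
  shows "eq_upto N a b \<Longrightarrow> eq_upto N c d \<Longrightarrow> eq_upto N (a * c) (b * d)"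
  unfolding eq_upto_def fps_mult_nth by (auto intro!: sum.cong)

lemma eq_upto_mult_left:
  fixes a b c :: "'a::comm_semiring_1 fps"
  shows "eq_upto N a b \<Longrightarrow> eq_upto N (c * a) (c * b)"
  by (rule eq_upto_mult) auto

lemma eq_upto_power:
  fixes a b :: "'a::comm_semiring_1 fps"
  shows "eq_upto N a b \<Longrightarrow> eq_upto N (a ^ k) (b ^ k)"
  by (induction k) (auto intro: eq_upto_mult)

lemma eq_upto_prod:
  fixes g h :: "'b \<Rightarrow> 'a::comm_semiring_1 fps"
  shows "(\<And>j. j \<in> A \<Longrightarrow> eq_upto N (g j) (h j)) \<Longrightarrow> eq_upto N (prod g A) (prod h A)"
  by (induction A rule: infinite_finite_induct) (auto intro: eq_upto_mult)

lemma eq_upto_prod_subset: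
  fixes g :: "'b \<Rightarrow> 'a::comm_semiring_1 fps"
  assumes "finite S" "T \<subseteq> S" "\<And>j. j \<in> S - T \<Longrightarrow> eq_upto N (g j) 1"
  shows "eq_upto N (prod g S) (prod g T)"
proof -
  have "prod g S = prod g T * prod g (S - T)"
    using assms by (metis prod.subset_diff mult.commute)
  moreover have "eq_upto N (prod g (S - T)) 1"
    using eq_upto_prod[of "S - T" N g "\<lambda>_. 1"] assms(3) by simp
  ultimately show ?thesis
    using eq_upto_mult_left[of N "prod g (S - T)" 1 "prod g T"] by simp
qed

lemma eq_upto_mult_X_power_0:
  "N < e \<Longrightarrow> eq_upto N (a * fps_X ^ e :: 'a::comm_ring_1 fps) 0"
  by (auto simp: eq_upto_def fps_X_power_mult_right_nth)

lemma eq_upto_1_minus_X_power: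
  "N < j \<Longrightarrow> eq_upto N (1 - fps_X ^ j :: 'a::comm_ring_1 fps) 1"
  by (auto simp: eq_upto_def)

lemma fps_X_power_compose_X_power:
  assumes "r > 0"
  shows "(fps_X ^ k :: 'a::idom fps) oo fps_X ^ r = fps_X ^ (k * r)"
proof -
  have "fps_X ^ k oo fps_X ^ r = (fps_X oo fps_X ^ r :: 'a fps) ^ k"
    by (rule fps_compose_power [symmetric]) (use assms in simp)
  also have "fps_X oo fps_X ^ r = (fps_X ^ r :: 'a fps)"
    using assms by simp
  finally show ?thesis
    by (metis mult.commute power_mult)
qed

lemma fps_compose_X_power_assoc:
  "r > 0 \<Longrightarrow> s > 0 \<Longrightarrow> (a :: 'a::idom fps) oo fps_X ^ s oo fps_X ^ r = a oo fps_X ^ (s * r)"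
  by (simp add: fps_compose_assoc [symmetric] fps_X_power_compose_X_power)

lemma one_minus_X_power_compose_X_power:
  "r > 0 \<Longrightarrow> (1 - fps_X ^ j :: 'a::idom fps) oo fps_X ^ r = 1 - fps_X ^ (j * r)"
  by (simp add: fps_compose_sub_distrib fps_X_power_compose_X_power)

lemma eq_upto_compose_X_power:
  assumes "r > 0" "eq_upto N a b"
  shows "eq_upto N (a oo fps_X ^ r) (b oo fps_X ^ r)"
  using assms by (auto simp: eq_upto_def fps_nth_compose_X_power intro: order_trans[OF div_le_dividend])

lemma fps_X_power_mult_compose_nth:
  "(fps_X ^ k * (a oo fps_X ^ r)) $ m = (if k \<le> m \<and> r dvd m - k then a $ ((m - k) div r) else 0)"
  by (simp add: fps_X_power_mult_nth fps_nth_compose_X_power)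

text \<open>Intended for factors with \<open>g j = 1 + O(q\<^sup>j)\<close>, for which the coefficient of \<open>q\<^sup>n\<close> of the
  infinite product is already that of the first \<open>n\<close> factors.\<close>

definition fps_infprod :: "(nat \<Rightarrow> 'a::comm_semiring_1 fps) \<Rightarrow> 'a fps" where
  "fps_infprod g = Abs_fps (\<lambda>n. (\<Prod>j\<in>{1..n}. g j) $ n)"

lemma eq_upto_fps_infprod:
  fixes g :: "nat \<Rightarrow> 'a::comm_semiring_1 fps"
  assumes g: "\<And>j. j \<ge> 1 \<Longrightarrow> eq_upto (j - 1) (g j) 1" and "N \<le> M"
  shows "eq_upto N (fps_infprod g) (\<Prod>j\<in>{1..M}. g j)"
  unfolding eq_upto_def
proof (intro allI impI)
  fix i assume "i \<le> N"
  have "eq_upto i (\<Prod>j\<in>{1..M}. g j) (\<Prod>j\<in>{1..i}. g j)"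
  proof (rule eq_upto_prod_subset)
    fix j assume "j \<in> {1..M} - {1..i}"
    then have "j \<ge> 1" "i \<le> j - 1"
      by auto
    then show "eq_upto i (g j) 1"
      using g eq_upto_mono by blast
  qed (use \<open>i \<le> N\<close> \<open>N \<le> M\<close> in auto)
  then show "fps_infprod g $ i = (\<Prod>j\<in>{1..M}. g j) $ i"
    by (simp add: fps_infprod_def eq_upto_def)
qed

section \<open>Even and odd parts\<close>

text \<open>\<open>has_parity True a\<close> says that \<open>a\<close> is a series in \<open>q\<^sup>2\<close>, \<open>has_parity False a\<close> that
  \<open>a\<close> is \<open>q\<close> times such a series.\<close>

definition has_parity :: "bool \<Rightarrow> 'a::zero fps \<Rightarrow> bool" where
  "has_parity e a \<longleftrightarrow> (\<forall>n. even n \<noteq> e \<longrightarrow> a $ n = 0)"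

definition fps_even_part :: "'a::zero fps \<Rightarrow> 'a fps" where
  "fps_even_part a = Abs_fps (\<lambda>n. if even n then a $ n else 0)"

definition fps_odd_part :: "'a::zero fps \<Rightarrow> 'a fps" where
  "fps_odd_part a = Abs_fps (\<lambda>n. if odd n then a $ n else 0)"

lemma has_parity_mult:
  fixes a b :: "'a::comm_semiring_1 fps"
  assumes "has_parity e a" "has_parity e' b"
  shows "has_parity (e = e') (a * b)"
  unfolding has_parity_def fps_mult_nth
proof (intro allI impI sum.neutral ballI)
  fix n i :: nat assume n: "even n \<noteq> (e = e')" and i: "i \<in> {0..n}"
  then have "even i \<noteq> e \<or> even (n - i) \<noteq> e'"
    by (metis atLeastAtMost_iff even_add le_add_diff_inverse)
  then show "a $ i * b $ (n - i) = 0"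
    using assms by (auto simp: has_parity_def)
qed

lemma has_parity_X_mult: "has_parity e a \<Longrightarrow> has_parity (\<not> e) (fps_X * (a::'a::comm_ring_1 fps))"
  by (auto simp: has_parity_def fps_X_mult_nth)

lemma has_parity_compose_X_power: "even r \<Longrightarrow> has_parity True (a oo fps_X ^ r)"
  by (auto simp: has_parity_def fps_nth_compose_X_power dest: dvd_trans)

lemma has_parity_even_part: "has_parity True (fps_even_part a)"
  by (simp add: has_parity_def fps_even_part_def)

lemma has_parity_odd_part: "has_parity False (fps_odd_part a)"
  by (simp add: has_parity_def fps_odd_part_def)

lemma fps_even_part_plus_odd_part: "fps_even_part a + fps_odd_part a = (a::'a::monoid_add fps)"
  by (rule fps_ext) (simp add: fps_even_part_def fps_odd_part_def)

lemma fps_even_part_add: "fps_even_part (a + b) = fps_even_part a + fps_even_part (b::'a::monoid_add fps)"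
  by (rule fps_ext) (simp add: fps_even_part_def)

lemma fps_odd_part_add: "fps_odd_part (a + b) = fps_odd_part a + fps_odd_part (b::'a::monoid_add fps)"
  by (rule fps_ext) (simp add: fps_odd_part_def)

lemma fps_even_part_has_parity:
  "has_parity e a \<Longrightarrow> fps_even_part a = (if e then a else 0)"
  by (rule fps_ext) (auto simp: has_parity_def fps_even_part_def)

lemma fps_odd_part_has_parity:
  "has_parity e a \<Longrightarrow> fps_odd_part a = (if e then 0 else a)"
  by (rule fps_ext) (auto simp: has_parity_def fps_odd_part_def)

lemma fps_parts_mult_even:
  fixes a w :: "'a::comm_semiring_1 fps"
  assumes "has_parity True w"
  shows "fps_even_part (a * w) = fps_even_part a * w" "fps_odd_part (a * w) = fps_odd_part a * w"
proof -
  have "a * w = fps_even_part a * w + fps_odd_part a * w"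
    by (metis fps_even_part_plus_odd_part distrib_right)
  moreover have "has_parity True (fps_even_part a * w)" "has_parity False (fps_odd_part a * w)"
    using has_parity_mult[OF has_parity_even_part assms] has_parity_mult[OF has_parity_odd_part assms]
    by simp_all
  ultimately show "fps_even_part (a * w) = fps_even_part a * w" "fps_odd_part (a * w) = fps_odd_part a * w"
    by (simp_all add: fps_even_part_add fps_odd_part_add fps_even_part_has_parity fps_odd_part_has_parity)
qed

lemma fps_parts_mult_even_eq:
  fixes h w u v :: "'a::comm_semiring_1 fps"
  assumes "has_parity True w" "h * w = u + v" "has_parity True u" "has_parity False v"
  shows "fps_even_part h * w = u" "fps_odd_part h * w = v"
  using assms by (simp_all flip: fps_parts_mult_even[OF assms(1)]
      add: fps_even_part_add fps_odd_part_add fps_even_part_has_parity fps_odd_part_has_parity)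

section \<open>Power series over \<open>GF(2)\<close>\<close>

definition fps_of_int :: "int fps \<Rightarrow> 'a::ring_1 fps" where
  "fps_of_int a = Abs_fps (\<lambda>n. of_int (a $ n))"

lemma fps_of_int_nth [simp]: "fps_of_int a $ n = of_int (a $ n)"
  by (simp add: fps_of_int_def)

lemma fps_of_int_add: "fps_of_int (a + b) = fps_of_int a + fps_of_int b"
  by (rule fps_ext) simp

lemma fps_of_int_diff: "fps_of_int (a - b) = fps_of_int a - fps_of_int b"
  by (rule fps_ext) simp

lemma fps_of_int_mult: "fps_of_int (a * b) = (fps_of_int a * fps_of_int b :: 'a::comm_ring_1 fps)"
  by (rule fps_ext) (simp add: fps_mult_nth)

lemma fps_of_int_1: "fps_of_int 1 = 1"
  by (rule fps_ext) simp

lemma fps_of_int_X_power: "fps_of_int (fps_X ^ k) = fps_X ^ k"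
  by (rule fps_ext) simp

lemma fps_of_int_power: "fps_of_int (a ^ k) = (fps_of_int a ^ k :: 'a::comm_ring_1 fps)"
  by (induction k) (simp_all add: fps_of_int_1 fps_of_int_mult)

lemma fps_of_int_prod: "fps_of_int (prod g A) = (\<Prod>j\<in>A. fps_of_int (g j) :: 'a::comm_ring_1 fps)"
  by (induction A rule: infinite_finite_induct) (simp_all add: fps_of_int_1 fps_of_int_mult)

lemma fps_of_int_even_part: "fps_of_int (fps_even_part a) = fps_even_part (fps_of_int a)"
  by (rule fps_ext) (simp add: fps_even_part_def)

lemma fps_of_int_odd_part: "fps_of_int (fps_odd_part a) = fps_odd_part (fps_of_int a)"
  by (rule fps_ext) (simp add: fps_odd_part_def)

lemma eq_upto_fps_of_int: "eq_upto N a b \<Longrightarrow> eq_upto N (fps_of_int a) (fps_of_int b)"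
  by (simp add: eq_upto_def)

lemma bit_of_int_eq_0_iff: "(of_int c :: bit) = 0 \<longleftrightarrow> even c"
  by (induct c rule: int_induct[where k=0]) auto

lemma bit_fps_minus: "(a :: bit fps) - b = a + b"
  by (rule fps_ext) simp

lemma bit_fps_add_square: "((a::bit fps) + b) ^ 2 = a ^ 2 + b ^ 2"
proof -
  have "(2 :: bit fps) = 0"
    by (simp add: numeral_fps_const)
  moreover have "(a + b) ^ 2 = a ^ 2 + 2 * a * b + b ^ 2"
    by (simp add: power2_eq_square algebra_simps)
  ultimately show ?thesis by simp
qed

text \<open>Frobenius: the cross terms \<open>a\<^sub>i a\<^sub>n\<^sub>-\<^sub>i\<close> with \<open>2i \<noteq> n\<close> cancel in pairs.\<close>

theorem bit_fps_square: "(a :: bit fps) ^ 2 = a oo fps_X ^ 2"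
proof (rule fps_ext)
  fix n :: nat
  define P where "P = {i \<in> {0..n}. 2 * i \<noteq> n}"
  define D where "D = {i \<in> {0..n}. 2 * i = n}"
  have "P \<union> D = {0..n}"
    by (auto simp: P_def D_def)
  then have "(a ^ 2) $ n = (\<Sum>i\<in>P \<union> D. a $ i * a $ (n - i))"
    by (simp add: power2_eq_square fps_mult_nth)
  also have "\<dots> = (\<Sum>i\<in>P. a $ i * a $ (n - i)) + (\<Sum>i\<in>D. a $ i * a $ (n - i))"
    by (rule sum.union_disjoint) (auto simp: P_def D_def)
  also have "(\<Sum>i\<in>P. a $ i * a $ (n - i)) = 0"
    by (rule sum_involution_eq_0[where h = "\<lambda>i. n - i"]) (auto simp: P_def)
  also have "(\<Sum>i\<in>D. a $ i * a $ (n - i)) = (if even n then a $ (n div 2) else 0)"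
  proof (cases "even n")
    case True
    then have "D = {n div 2}" "n - n div 2 = n div 2"
      by (auto simp: D_def)
    then show ?thesis
      using True by (cases "a $ (n div 2)") auto
  next
    case False
    then have "D = {}"
      by (auto simp: D_def)
    then show ?thesis
      using False by simp
  qed
  finally show "(a ^ 2) $ n = (a oo fps_X ^ 2) $ n"
    by (simp add: fps_nth_compose_X_power)
qed

lemma bit_fps_power4: "(a :: bit fps) ^ 4 = a oo fps_X ^ 4"
proof -
  have "a ^ 4 = (a ^ 2) ^ 2"
    by (simp flip: power_mult)
  also have "\<dots> = a oo fps_X ^ 2 oo fps_X ^ 2"
    by (simp only: bit_fps_square[of a] bit_fps_square[of "a oo fps_X ^ 2"])
  finally show ?thesis
    by (simp add: fps_compose_X_power_assoc)
qed

lemma bit_fps_compose_square: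
  assumes "r > 0"
  shows "((a :: bit fps) oo fps_X ^ r) ^ 2 = a oo fps_X ^ (2 * r)"
proof -
  have "(a oo fps_X ^ r) ^ 2 = a oo fps_X ^ r oo fps_X ^ 2"
    by (rule bit_fps_square)
  also have "\<dots> = a oo fps_X ^ (2 * r)"
    using assms by (simp add: fps_compose_X_power_assoc mult.commute)
  finally show ?thesis .
qed

lemma bit_fps_compose_power4:
  assumes "r > 0"
  shows "((a :: bit fps) oo fps_X ^ r) ^ 4 = a oo fps_X ^ (4 * r)"
proof -
  have "(a oo fps_X ^ r) ^ 4 = a oo fps_X ^ r oo fps_X ^ 4"
    by (rule bit_fps_power4)
  also have "\<dots> = a oo fps_X ^ (4 * r)"
    using assms by (simp add: fps_compose_X_power_assoc mult.commute)
  finally show ?thesis .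
qed

section \<open>Jacobi's identity \<open>f\<^sub>1\<^sup>3 \<equiv> \<psi>(q)\<close> modulo 2\<close>

text \<open>\<open>euler\<close> is \<open>f\<^sub>1\<close> modulo 2, and \<open>f\<^sub>r\<close> is \<open>euler oo fps_X ^ r\<close>.\<close>

definition euler :: "bit fps" where
  "euler = fps_infprod (\<lambda>j. 1 - fps_X ^ j)"

definition qpoch :: "nat \<Rightarrow> bit fps" where
  "qpoch m = (\<Prod>j\<in>{1..m}. 1 - fps_X ^ j)"

lemma qpoch_0 [simp]: "qpoch 0 = 1"
  by (simp add: qpoch_def)

lemma qpoch_Suc: "qpoch (Suc m) = qpoch m * (1 - fps_X ^ Suc m)"
  by (simp add: qpoch_def)

lemma eq_upto_qpoch_euler: "N \<le> m \<Longrightarrow> eq_upto N (qpoch m) euler"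
  unfolding qpoch_def euler_def
  by (rule eq_upto_sym, rule eq_upto_fps_infprod) (auto simp: eq_upto_def)

lemma euler_nth_0 [simp]: "euler $ 0 = 1"
  using eq_upto_qpoch_euler[of 0 0] by (simp add: eq_upto_def)

definition tri :: "nat \<Rightarrow> nat" where
  "tri t = t * (t + 1) div 2"

definition psi :: "bit fps" where
  "psi = Abs_fps (\<lambda>m. if \<exists>t. m = tri t then 1 else 0)"

lemma psi_nth: "psi $ m = (if \<exists>t. m = tri t then 1 else 0)"
  by (simp add: psi_def)

lemma psi_nth_0 [simp]: "psi $ 0 = 1"
proof -
  have "0 = tri 0"
    by (simp add: tri_def)
  then show ?thesis
    by (auto simp: psi_nth)
qed

lemma two_tri: "2 * tri t = t * (t + 1)"
  by (simp add: tri_def)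

lemma eight_tri_plus_1: "8 * int (tri t) + 1 = (2 * int t + 1) * (2 * int t + 1)"
proof -
  have "int (2 * tri t) = int t * (int t + 1)"
    by (simp only: two_tri) (simp add: algebra_simps)
  then show ?thesis
    by (simp add: algebra_simps)
qed

lemma inj_tri: "inj tri"
proof -
  have "tri (Suc t) = tri t + Suc t" for t
    using two_tri[of t] two_tri[of "Suc t"] by simp
  then have "strict_mono tri"
    by (simp add: strict_mono_Suc_iff)
  then show ?thesis
    by (rule strict_mono_imp_inj_on)
qed

text \<open>The triangular numbers are the values of \<open>2k\<^sup>2 + k\<close> for \<open>k \<in> \<int>\<close>, each taken once:
  \<open>tri (2k) = 2k\<^sup>2 + k\<close> and \<open>tri (2k - 1) = 2(-k)\<^sup>2 + (-k)\<close>.\<close>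

definition tri_of_int :: "int \<Rightarrow> nat" where
  "tri_of_int k = nat (2 * k * k + k)"

lemma int_tri_of_int: "int (tri_of_int k) = 2 * k * k + k"
proof -
  have "0 \<le> k * (2 * k + 1)"
  proof (cases "k \<ge> 0")
    case False
    then show ?thesis
      by (intro mult_nonpos_nonpos) auto
  qed simp
  then show ?thesis
    by (simp add: tri_of_int_def algebra_simps)
qed

lemma abs_le_tri_of_int: "\<bar>k\<bar> \<le> int (tri_of_int k)"
proof -
  have "\<bar>k\<bar> * 1 \<le> \<bar>k\<bar> * \<bar>k\<bar>" if "k \<noteq> 0"
    by (rule mult_left_mono) (use that in auto)
  then have "\<bar>k\<bar> \<le> k * k"
    by (cases "k = 0") (auto simp: abs_mult_self_eq)
  then show ?thesis
    unfolding int_tri_of_int by arith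
qed

lemma inj_tri_of_int: "inj tri_of_int"
proof
  fix k l assume "tri_of_int k = tri_of_int l"
  then have "(k - l) * (2 * k + 2 * l + 1) = 0"
    using int_tri_of_int[of k] int_tri_of_int[of l] by (simp add: algebra_simps)
  moreover have "2 * k + 2 * l + 1 \<noteq> 0"
    by presburger
  ultimately show "k = l"
    by simp
qed

lemma range_tri_of_int: "range tri_of_int = range tri"
proof (intro set_eqI iffI)
  fix m assume "m \<in> range tri_of_int"
  then obtain k where k: "m = tri_of_int k"
    by blast
  define t where "t = nat (if k \<ge> 0 then 2 * k else - 2 * k - 1)"
  have "int (t * (t + 1)) = int (2 * m)"
    by (auto simp: k t_def int_tri_of_int algebra_simps)
  then have "t * (t + 1) = 2 * m"
    by (simp only: of_nat_eq_iff)
  then have "m = tri t"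
    by (simp add: tri_def)
  then show "m \<in> range tri"
    by simp
next
  fix m assume "m \<in> range tri"
  then obtain t where t: "m = tri t"
    by blast
  define k where "k = (if even t then int t div 2 else - (int t + 1) div 2)"
  have "2 * int m = int t * (int t + 1)"
    using two_tri[of t] t by (metis of_nat_1 of_nat_add of_nat_mult of_nat_numeral)
  then have "int m = int (tri_of_int k)"
    unfolding int_tri_of_int k_def by (cases "even t") (auto elim!: evenE oddE simp: algebra_simps)
  then show "m \<in> range tri_of_int"
    by (metis of_nat_eq_iff rangeI)
qed

lemma eq_upto_psi:
  assumes "N \<le> n"
  shows "eq_upto N psi (\<Sum>k\<in>{- int n..int n}. fps_X ^ tri_of_int k)"
  unfolding eq_upto_def
proof (intro allI impI)
  fix i assume "i \<le> N"
  have "(\<Sum>k\<in>{- int n..int n}. fps_X ^ tri_of_int k) $ i =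
      (\<Sum>k\<in>{- int n..int n}. if tri_of_int k = i then 1 else 0 :: bit)"
    by (simp add: fps_sum_nth eq_commute)
  also have "\<dots> = (if i \<in> range tri_of_int then 1 else 0)"
  proof (cases "i \<in> range tri_of_int")
    case True
    then obtain k0 where k0: "i = tri_of_int k0"
      by blast
    then have "\<bar>k0\<bar> \<le> int n"
      using abs_le_tri_of_int[of k0] \<open>i \<le> N\<close> assms by linarith
    then show ?thesis
      using True k0 inj_tri_of_int by (simp add: inj_eq sum.delta' abs_le_iff cong: if_cong)
  next
    case False
    then show ?thesis
      by (subst if_not_P[OF False], intro sum.neutral) auto
  qed
  finally show "psi $ i = (\<Sum>k\<in>{- int n..int n}. fps_X ^ tri_of_int k) $ i"
    by (simp add: psi_nth range_tri_of_int image_iff eq_commute)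
qed

subsection \<open>A finite form of the triple product\<close>

text \<open>\<open>central_qbinom n k\<close> is the Gaussian binomial coefficient \<open>[2n, n+k]\<close> modulo 2
  (lemma \<open>qpoch_mult_central_qbinom\<close>); the recursion is two steps of the \<open>q\<close>-Pascal rule.\<close>

fun central_qbinom :: "nat \<Rightarrow> int \<Rightarrow> bit fps" where
  "central_qbinom 0 k = (if k = 0 then 1 else 0)"
| "central_qbinom (Suc n) k = (1 + fps_X ^ (2 * n + 1)) * central_qbinom n k
     + fps_X ^ nat (int n + 1 - k) * central_qbinom n (k - 1)
     + fps_X ^ nat (int n + 1 + k) * central_qbinom n (k + 1)"

lemma central_qbinom_eq_0: "int n < \<bar>k\<bar> \<Longrightarrow> central_qbinom n k = 0"
  by (induction n arbitrary: k) auto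

lemma qpascal_step_identity:
  fixes x A B P :: "'a::comm_ring_1"
  shows "(1 + x * (A * B)) * ((1 - x * A) * (1 - x * B) * P)
      + x * B * ((1 - A) * (1 - x * A) * P) + x * A * ((1 - B) * (1 - x * B) * P)
    = (1 - x * (A * B)) * (1 - x * (x * (A * B))) * P"
  by (simp add: algebra_simps)

lemma central_qbinom_uminus: "central_qbinom n (- k) = central_qbinom n k"
proof (induction n arbitrary: k)
  case (Suc n)
  have "- k - 1 = - (k + 1)" "- k + 1 = - (k - 1)"
    by simp_all
  then show ?case
    by (simp only: central_qbinom.simps Suc.IH) (simp add: algebra_simps)
qed simp

lemma central_qbinom_top: "central_qbinom n (int n) = 1"
  by (induction n) (simp_all add: central_qbinom_eq_0)

lemma qpoch_mult_central_qbinom_step: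
  assumes IH: "\<And>k. \<bar>k\<bar> \<le> int n \<Longrightarrow>
      qpoch (nat (int n + k)) * qpoch (nat (int n - k)) * central_qbinom n k = qpoch (2 * n)"
    and k: "\<bar>k\<bar> \<le> int n"
  shows "qpoch (nat (int (Suc n) + k)) * qpoch (nat (int (Suc n) - k)) * central_qbinom (Suc n) k
    = qpoch (2 * Suc n)"
proof -
  define P where "P = qpoch (2 * n)"
  have pred: "qpoch (Suc (nat (int n + k'))) * qpoch (Suc (nat (int n - k'))) * central_qbinom n (k' - 1)
      = (1 - fps_X ^ nat (int n + k')) * (1 - fps_X ^ Suc (nat (int n + k'))) * P"
    if "\<bar>k'\<bar> \<le> int n" for k'
  proof (cases "nat (int n + k')")
    case 0
    then have "int n < \<bar>k' - 1\<bar>"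
      using that by simp
    then show ?thesis
      using 0 by (simp add: central_qbinom_eq_0)
  next
    case (Suc a')
    then have "\<bar>k' - 1\<bar> \<le> int n" "nat (int n + (k' - 1)) = a'" "nat (int n - (k' - 1)) = Suc (nat (int n - k'))"
      using that by auto
    then show ?thesis
      using IH[of "k' - 1"] Suc by (simp add: qpoch_Suc P_def mult_ac)
  qed
  define a b where "a = nat (int n + k)" and "b = nat (int n - k)"
  have ab: "a + b = 2 * n"
    using k by (simp add: a_def b_def)
  have B0: "qpoch (Suc a) * qpoch (Suc b) * central_qbinom n k = (1 - fps_X ^ Suc a) * (1 - fps_X ^ Suc b) * P"
    using IH[OF k] by (simp add: qpoch_Suc a_def b_def P_def mult_ac)
  have B1: "qpoch (Suc a) * qpoch (Suc b) * central_qbinom n (k - 1) = (1 - fps_X ^ a) * (1 - fps_X ^ Suc a) * P"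
    using pred[OF k] by (simp add: a_def b_def)
  have B2: "qpoch (Suc a) * qpoch (Suc b) * central_qbinom n (k + 1) = (1 - fps_X ^ b) * (1 - fps_X ^ Suc b) * P"
    using pred[of "- k"] k central_qbinom_uminus[of n "k + 1"] by (simp add: a_def b_def mult_ac)
  have nat_ab: "nat (int (Suc n) + k) = Suc a" "nat (int (Suc n) - k) = Suc b"
    using k by (simp_all add: a_def b_def)
  have "nat (int n + 1 - k) = Suc b" "nat (int n + 1 + k) = Suc a"
    using k by (simp_all add: a_def b_def)
  then have "qpoch (Suc a) * qpoch (Suc b) * central_qbinom (Suc n) k
      = (1 + fps_X ^ (2 * n + 1)) * (qpoch (Suc a) * qpoch (Suc b) * central_qbinom n k)
        + fps_X ^ Suc b * (qpoch (Suc a) * qpoch (Suc b) * central_qbinom n (k - 1))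
        + fps_X ^ Suc a * (qpoch (Suc a) * qpoch (Suc b) * central_qbinom n (k + 1))"
    unfolding central_qbinom.simps by (simp only:) (simp add: algebra_simps)
  also have "\<dots> = (1 - fps_X ^ (2 * n + 1)) * (1 - fps_X ^ (2 * n + 2)) * P"
  proof -
    have X: "(fps_X :: bit fps) ^ (2 * n + 1) = fps_X * (fps_X ^ a * fps_X ^ b)"
      "(fps_X :: bit fps) ^ (2 * n + 2) = fps_X * (fps_X * (fps_X ^ a * fps_X ^ b))"
      by (simp_all flip: power_add ab)
    show ?thesis
      unfolding B0 B1 B2 X power_Suc
      using qpascal_step_identity[of fps_X "fps_X ^ a" "fps_X ^ b" P] by (simp only: mult_ac)
  qed
  also have "\<dots> = qpoch (2 * Suc n)"
    by (simp add: P_def qpoch_Suc mult_ac)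
  finally show ?thesis
    by (simp only: nat_ab)
qed

lemma qpoch_mult_central_qbinom:
  "\<bar>k\<bar> \<le> int n \<Longrightarrow> qpoch (nat (int n + k)) * qpoch (nat (int n - k)) * central_qbinom n k = qpoch (2 * n)"
proof (induction n arbitrary: k)
  case (Suc n)
  consider "k = int (Suc n)" | "k = - int (Suc n)" | "\<bar>k\<bar> \<le> int n"
    using Suc.prems by linarith
  then show ?case
  proof cases
    case 1
    then have "central_qbinom (Suc n) k = 1" "nat (int (Suc n) + k) = 2 * Suc n" "nat (int (Suc n) - k) = 0"
      by (simp_all only: central_qbinom_top) simp_all
    then show ?thesis
      by (simp del: central_qbinom.simps)
  next
    case 2
    then have "central_qbinom (Suc n) k = 1" "nat (int (Suc n) + k) = 0" "nat (int (Suc n) - k) = 2 * Suc n"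
      by (simp_all only: central_qbinom_uminus central_qbinom_top) simp_all
    then show ?thesis
      by (simp del: central_qbinom.simps)
  next
    case 3
    show ?thesis
      by (rule qpoch_mult_central_qbinom_step[OF Suc.IH 3])
  qed
qed simp

lemma eq_upto_central_qbinom_inverse_euler:
  assumes "\<bar>k\<bar> \<le> int n"
  shows "eq_upto (n - nat \<bar>k\<bar>) (central_qbinom n k) (inverse euler)"
proof -
  define d where "d = n - nat \<bar>k\<bar>"
  have "eq_upto d (euler * euler * central_qbinom n k)
      (qpoch (nat (int n + k)) * qpoch (nat (int n - k)) * central_qbinom n k)"
    by (intro eq_upto_mult eq_upto_sym[OF eq_upto_qpoch_euler]) (auto simp: d_def)
  also have "\<dots> = qpoch (2 * n)"
    using qpoch_mult_central_qbinom[OF assms] .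
  also have "eq_upto d \<dots> euler"
    by (rule eq_upto_qpoch_euler) (simp add: d_def)
  finally have "eq_upto d (inverse euler * inverse euler * (euler * euler * central_qbinom n k))
      (inverse euler * inverse euler * euler)"
    by (rule eq_upto_mult_left)
  moreover have "inverse euler * euler = 1"
    by (simp add: inverse_mult_eq_1)
  ultimately show ?thesis
    by (simp add: d_def mult.assoc flip: mult.assoc[of "inverse euler" euler])
qed

text \<open>The finite triple product: \<open>theta_sum n\<close>, the sum over \<open>\<bar>k\<bar> \<le> n\<close> of \<open>[2n, n+k]\<close> taken
  at \<open>q\<^sup>4\<close> times \<open>q\<^bsup>2k\<cdot>k + k\<^esup>\<close>, equals \<open>theta_prod n\<close>. As \<open>n \<rightarrow> \<infinity>\<close> the former tends to \<open>\<psi>(q) / f\<^sub>4\<close>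
  and the latter to \<open>f\<^sub>1 / f\<^sub>2\<close>; with \<open>f\<^sub>2 = f\<^sub>1\<^sup>2\<close> and \<open>f\<^sub>4 = f\<^sub>1\<^sup>4\<close> this is \<open>f\<^sub>1\<^sup>3 = \<psi>(q)\<close>.\<close>

definition theta_term :: "nat \<Rightarrow> int \<Rightarrow> bit fps" where
  "theta_term n k = (central_qbinom n k oo fps_X ^ 4) * fps_X ^ tri_of_int k"

definition theta_sum :: "nat \<Rightarrow> bit fps" where
  "theta_sum n = (\<Sum>k\<in>{- int n..int n}. theta_term n k)"

lemma theta_term_eq_0: "int n < \<bar>k\<bar> \<Longrightarrow> theta_term n k = 0"
  by (simp add: theta_term_def central_qbinom_eq_0)

lemma sum_theta_term:
  assumes "a \<le> - int n" "int n \<le> b"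
  shows "(\<Sum>k\<in>{a..b}. theta_term n k) = theta_sum n"
  unfolding theta_sum_def using assms
  by (intro sum.mono_neutral_right) (auto simp: theta_term_eq_0)

lemma sum_int_interval_shift:
  fixes F :: "int \<Rightarrow> 'a::comm_monoid_add"
  shows "(\<Sum>k\<in>{a..b}. F (k + c)) = (\<Sum>k\<in>{a + c..b + c}. F k)"
  using sum.reindex[of "plus c" "{a..b}" F] by (simp add: add.commute)

lemma theta_term_Suc:
  "theta_term (Suc n) k = (1 + fps_X ^ (8 * n + 4)) * theta_term n k
     + fps_X ^ (4 * n + 3) * theta_term n (k - 1) + fps_X ^ (4 * n + 1) * theta_term n (k + 1)"
proof (cases "\<bar>k\<bar> \<le> int n + 1")
  case True
  have "int (nat (int n + 1 - k) * 4 + tri_of_int k) = int (4 * n + 3 + tri_of_int (k - 1))"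
    "int (nat (int n + 1 + k) * 4 + tri_of_int k) = int (4 * n + 1 + tri_of_int (k + 1))"
    using True by (simp_all add: int_tri_of_int algebra_simps)
  then have exps: "fps_X ^ (nat (int n + 1 - k) * 4) * fps_X ^ tri_of_int k
      = (fps_X ^ (4 * n + 3) * fps_X ^ tri_of_int (k - 1) :: bit fps)"
    "fps_X ^ (nat (int n + 1 + k) * 4) * fps_X ^ tri_of_int k
      = (fps_X ^ (4 * n + 1) * fps_X ^ tri_of_int (k + 1) :: bit fps)"
    by (simp_all only: of_nat_eq_iff flip: power_add)
  have "(2 * n + 1) * 4 = 8 * n + 4" "(fps_X ^ 4 :: bit fps) $ 0 = 0"
    by simp_all
  then have "central_qbinom (Suc n) k oo fps_X ^ 4
      = (1 + fps_X ^ (8 * n + 4)) * (central_qbinom n k oo fps_X ^ 4)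
        + fps_X ^ (nat (int n + 1 - k) * 4) * (central_qbinom n (k - 1) oo fps_X ^ 4)
        + fps_X ^ (nat (int n + 1 + k) * 4) * (central_qbinom n (k + 1) oo fps_X ^ 4)"
    by (simp only: central_qbinom.simps fps_compose_add_distrib fps_compose_mult_distrib fps_compose_1
        fps_X_power_compose_X_power zero_less_numeral)
  then have "theta_term (Suc n) k = (1 + fps_X ^ (8 * n + 4)) * theta_term n k
      + (central_qbinom n (k - 1) oo fps_X ^ 4) * (fps_X ^ (nat (int n + 1 - k) * 4) * fps_X ^ tri_of_int k)
      + (central_qbinom n (k + 1) oo fps_X ^ 4) * (fps_X ^ (nat (int n + 1 + k) * 4) * fps_X ^ tri_of_int k)"
    by (simp add: theta_term_def algebra_simps)
  then show ?thesis
    unfolding exps by (simp add: theta_term_def mult_ac)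
qed (simp add: theta_term_eq_0)

lemma theta_sum_Suc:
  "theta_sum (Suc n) = (1 + fps_X ^ (4 * n + 1)) * (1 + fps_X ^ (4 * n + 3)) * theta_sum n"
proof -
  let ?I = "{- int (Suc n)..int (Suc n)}"
  have "theta_sum (Suc n) = (1 + fps_X ^ (8 * n + 4)) * (\<Sum>k\<in>?I. theta_term n k)
      + fps_X ^ (4 * n + 3) * (\<Sum>k\<in>?I. theta_term n (k + -1))
      + fps_X ^ (4 * n + 1) * (\<Sum>k\<in>?I. theta_term n (k + 1))"
    by (simp add: theta_sum_def theta_term_Suc sum.distrib sum_distrib_left)
  also have "\<dots> = (1 + fps_X ^ (8 * n + 4) + fps_X ^ (4 * n + 3) + fps_X ^ (4 * n + 1)) * theta_sum n"
    unfolding sum_int_interval_shift by (subst (1 2 3) sum_theta_term) (auto simp: algebra_simps)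
  also have "fps_X ^ (8 * n + 4) = (fps_X ^ ((4 * n + 1) + (4 * n + 3)) :: bit fps)"
    by (rule arg_cong[where f = "\<lambda>e. fps_X ^ e"]) simp
  also have "\<dots> = fps_X ^ (4 * n + 1) * fps_X ^ (4 * n + 3)"
    by (rule power_add)
  finally show ?thesis
    by (simp add: algebra_simps)
qed

definition theta_prod :: "nat \<Rightarrow> bit fps" where
  "theta_prod n = (\<Prod>j<n. (1 + fps_X ^ (4 * j + 1)) * (1 + fps_X ^ (4 * j + 3)))"

lemma theta_sum_eq_theta_prod: "theta_sum n = theta_prod n"
proof (induction n)
  case 0
  then show ?case
    by (simp add: theta_sum_def theta_prod_def theta_term_def tri_of_int_def)
next
  case (Suc n)
  then show ?case
    by (simp add: theta_sum_Suc theta_prod_def mult_ac)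
qed

text \<open>Modulo 2, \<open>1 + q\<^sup>j = 1 - q\<^sup>j\<close>, so \<open>theta_prod n\<close> is the product of the odd-indexed
  factors of \<open>qpoch (4 * n)\<close>.\<close>

lemma theta_prod_mult_qpoch: "theta_prod n * (qpoch (2 * n) oo fps_X ^ 2) = qpoch (4 * n)"
proof (induction n)
  case 0
  then show ?case
    by (simp add: theta_prod_def)
next
  case (Suc n)
  have X2: "(fps_X ^ 2 :: bit fps) $ 0 = 0"
    by simp
  have "qpoch (2 * Suc n) = qpoch (2 * n) * (1 - fps_X ^ (2 * n + 1)) * (1 - fps_X ^ (2 * n + 2))"
    by (simp add: qpoch_Suc)
  moreover have "(2 * n + 1) * 2 = 4 * n + 2" "(2 * n + 2) * 2 = 4 * n + 4"
    by simp_all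
  ultimately have q2: "qpoch (2 * Suc n) oo fps_X ^ 2
      = (qpoch (2 * n) oo fps_X ^ 2) * (1 - fps_X ^ (4 * n + 2)) * (1 - fps_X ^ (4 * n + 4))"
    by (simp only: fps_compose_mult_distrib[OF X2] one_minus_X_power_compose_X_power zero_less_numeral)
  have q4: "qpoch (4 * Suc n) = qpoch (4 * n) * (1 - fps_X ^ (4 * n + 1)) * (1 - fps_X ^ (4 * n + 2))
       * (1 - fps_X ^ (4 * n + 3)) * (1 - fps_X ^ (4 * n + 4))"
    by (simp add: qpoch_Suc numeral_eq_Suc)
  have "theta_prod (Suc n) = theta_prod n * (1 - fps_X ^ (4 * n + 1)) * (1 - fps_X ^ (4 * n + 3))"
    by (simp add: theta_prod_def bit_fps_minus mult.assoc)
  then have "theta_prod (Suc n) * (qpoch (2 * Suc n) oo fps_X ^ 2)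
      = theta_prod n * (qpoch (2 * n) oo fps_X ^ 2) * (1 - fps_X ^ (4 * n + 1))
        * (1 - fps_X ^ (4 * n + 2)) * (1 - fps_X ^ (4 * n + 3)) * (1 - fps_X ^ (4 * n + 4))"
    unfolding q2 by (simp only: mult_ac)
  then show ?case
    unfolding Suc.IH q4 .
qed

lemma eq_upto_theta_prod:
  assumes "N \<le> 2 * n"
  shows "eq_upto N (theta_prod n) (euler * inverse (euler oo fps_X ^ 2))"
proof -
  have "eq_upto N (theta_prod n * (euler oo fps_X ^ 2)) (theta_prod n * (qpoch (2 * n) oo fps_X ^ 2))"
    using assms by (intro eq_upto_mult_left eq_upto_compose_X_power eq_upto_sym[OF eq_upto_qpoch_euler]) auto
  also have "\<dots> = qpoch (4 * n)"
    by (rule theta_prod_mult_qpoch)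
  also have "eq_upto N \<dots> euler"
    using assms by (intro eq_upto_qpoch_euler) auto
  finally have "eq_upto N (theta_prod n * (euler oo fps_X ^ 2) * inverse (euler oo fps_X ^ 2))
      (euler * inverse (euler oo fps_X ^ 2))"
    by (rule eq_upto_mult) simp
  then show ?thesis
    by (simp add: mult.assoc inverse_mult_eq_1')
qed

lemma eq_upto_theta_sum: "eq_upto N (theta_sum (2 * N)) ((inverse euler oo fps_X ^ 4) * psi)"
proof -
  let ?I = "{- int (2 * N)..int (2 * N)}"
  have "eq_upto N (theta_sum (2 * N)) (\<Sum>k\<in>?I. (inverse euler oo fps_X ^ 4) * fps_X ^ tri_of_int k)"
    unfolding theta_sum_def
  proof (intro eq_upto_sum)
    fix k assume k: "k \<in> ?I"
    show "eq_upto N (theta_term (2 * N) k) ((inverse euler oo fps_X ^ 4) * fps_X ^ tri_of_int k)"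
    proof (cases "tri_of_int k \<le> N")
      case True
      then have "eq_upto N (central_qbinom (2 * N) k) (inverse euler)"
        using k abs_le_tri_of_int[of k]
        by (intro eq_upto_mono[OF eq_upto_central_qbinom_inverse_euler]) auto
      then show ?thesis
        unfolding theta_term_def by (intro eq_upto_mult eq_upto_compose_X_power) auto
    next
      case False
      then show ?thesis
        unfolding theta_term_def
        by (metis eq_upto_mult_X_power_0 eq_upto_sym eq_upto_trans not_le)
    qed
  qed
  also have "(\<Sum>k\<in>?I. (inverse euler oo fps_X ^ 4) * fps_X ^ tri_of_int k)
      = (inverse euler oo fps_X ^ 4) * (\<Sum>k\<in>?I. fps_X ^ tri_of_int k)"
    by (simp add: sum_distrib_left)
  also have "eq_upto N \<dots> ((inverse euler oo fps_X ^ 4) * psi)"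
    by (intro eq_upto_mult_left eq_upto_sym[OF eq_upto_psi]) auto
  finally show ?thesis .
qed

theorem euler_cube: "euler ^ 3 = psi"
proof -
  have "(inverse euler oo fps_X ^ 4) * psi = euler * inverse (euler oo fps_X ^ 2)"
  proof (rule fps_eq_if_eq_upto)
    fix N
    have "eq_upto N ((inverse euler oo fps_X ^ 4) * psi) (theta_sum (2 * N))"
      by (rule eq_upto_sym[OF eq_upto_theta_sum])
    also have "\<dots> = theta_prod (2 * N)"
      by (rule theta_sum_eq_theta_prod)
    also have "eq_upto N \<dots> (euler * inverse (euler oo fps_X ^ 2))"
      by (rule eq_upto_theta_prod) simp
    finally show "eq_upto N ((inverse euler oo fps_X ^ 4) * psi) (euler * inverse (euler oo fps_X ^ 2))" .
  qed
  then have main: "inverse (euler ^ 4) * psi = euler * inverse (euler ^ 2)"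
    by (simp add: fps_inverse_compose flip: bit_fps_square[of euler] bit_fps_power4[of euler])
  have inv: "euler ^ 4 * inverse (euler ^ 4) = 1" "euler ^ 2 * inverse (euler ^ 2) = 1"
    by (simp_all add: inverse_mult_eq_1' fps_nth_power_0)
  have "psi = euler ^ 4 * (inverse (euler ^ 4) * psi)"
    using inv(1) by (simp flip: mult.assoc)
  also have "\<dots> = euler ^ 3 * (euler ^ 2 * inverse (euler ^ 2))"
    unfolding main by (simp add: power_numeral_reduce mult_ac)
  finally show ?thesis
    using inv(2) by simp
qed

lemma euler_compose_cube: "r > 0 \<Longrightarrow> (euler oo fps_X ^ r) ^ 3 = psi oo fps_X ^ r"
  by (simp add: fps_compose_power euler_cube)

section \<open>The identity \<open>\<psi>(q) \<psi>(q\<^sup>3) \<equiv> \<psi>(q\<^sup>4) + q \<psi>(q\<^sup>1\<^sup>2)\<close> modulo 2\<close>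

definition odd_reps :: "int \<Rightarrow> (int \<times> int) set" where
  "odd_reps M = {(x, y). 0 < x \<and> 0 < y \<and> odd x \<and> odd y \<and> x * x + 3 * (y * y) = 4 * M}"

text \<open>Multiplication of \<open>x + y\<surd>-3\<close> by the sixth root of unity \<open>(1 \<plusminus> \<surd>-3) / 2\<close>, the sign chosen
  so that both coordinates stay odd, followed by taking absolute values.\<close>

definition rot :: "int \<times> int \<Rightarrow> int \<times> int" where
  "rot p = (let d = (fst p - snd p) div 2 in
     if even d then (\<bar>d - snd p\<bar>, snd p + d) else (2 * snd p + d, \<bar>d\<bar>))"

lemma rot_eq: "x = y + 2 * d \<Longrightarrow> rot (x, y) = (if even d then (\<bar>d - y\<bar>, y + d) else (2 * y + d, \<bar>d\<bar>))"
  by (simp add: rot_def)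

lemma odd_reps_finite: "finite (odd_reps M)"
proof -
  have "odd_reps M \<subseteq> {0..4 * M} \<times> {0..4 * M}"
  proof
    fix p assume "p \<in> odd_reps M"
    then obtain x y where p: "p = (x, y)" "0 < x" "0 < y" "x * x + 3 * (y * y) = 4 * M"
      by (auto simp: odd_reps_def)
    moreover have "x \<le> x * x" "y \<le> y * y" "0 \<le> x * x" "0 \<le> y * y"
      using p by (simp_all add: mult_le_cancel_left1)
    ultimately have "0 \<le> x" "x \<le> 4 * M" "0 \<le> y" "y \<le> 4 * M"
      by linarith+
    then show "p \<in> {0..4 * M} \<times> {0..4 * M}"
      using p(1) by simp
  qed
  then show ?thesis
    by (rule finite_subset) simp
qed

lemma odd_repsE:
  assumes "(x, y) \<in> odd_reps M"
  obtains d where "x = y + 2 * d" "0 < x" "0 < y" "odd x" "odd y" "x * x + 3 * (y * y) = 4 * M"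
proof -
  have "odd x" "odd y"
    using assms by (auto simp: odd_reps_def)
  then have "even (x - y)"
    by simp
  then obtain d where "x - y = 2 * d"
    by (rule evenE)
  then have "x = y + 2 * d"
    by simp
  then show ?thesis
    using assms by (intro that) (auto simp: odd_reps_def)
qed

lemma rot_mem_odd_reps:
  assumes "(x, y) \<in> odd_reps M"
  shows "rot (x, y) \<in> odd_reps M"
proof -
  obtain d where x: "x = y + 2 * d" and xy: "0 < x" "0 < y" "odd x" "odd y"
    and norm: "x * x + 3 * (y * y) = 4 * M"
    using assms by (rule odd_repsE)
  have norm_d: "4 * M = 4 * (d * d + d * y + y * y)"
    unfolding norm[symmetric] x by (simp add: algebra_simps)
  show ?thesis
  proof (cases "even d")
    case True
    then have "odd (d - y)" "odd (y + d)" "0 < y + d"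
      using xy x by auto
    moreover have "\<bar>d - y\<bar> * \<bar>d - y\<bar> + 3 * ((y + d) * (y + d)) = 4 * M"
      unfolding norm_d abs_mult_self_eq by (simp add: algebra_simps)
    ultimately show ?thesis
      using True by (auto simp: rot_eq[OF x] odd_reps_def)
  next
    case False
    then have "odd (2 * y + d)" "0 < 2 * y + d" "d \<noteq> 0"
      using xy x by auto
    moreover have "(2 * y + d) * (2 * y + d) + 3 * (\<bar>d\<bar> * \<bar>d\<bar>) = 4 * M"
      unfolding norm_d abs_mult_self_eq by (simp add: algebra_simps)
    ultimately show ?thesis
      using False by (auto simp: rot_eq[OF x] odd_reps_def)
  qed
qed

lemma rot_rot:
  assumes "(x, y) \<in> odd_reps M"
  shows "rot (rot (x, y)) = (x, y)"
proof -
  obtain d where x: "x = y + 2 * d" and xy: "0 < x" "0 < y" "odd x" "odd y"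
    using assms by (rule odd_repsE)
  consider "even d" "y < d" | "even d" "d \<le> y" | "odd d" "0 < d" | "odd d" "d < 0"
    by fastforce
  then show ?thesis
  proof cases
    case 1
    then have "rot (x, y) = (d - y, y + d)"
      by (simp add: rot_eq[OF x])
    moreover have "rot (d - y, y + d) = (x, y)"
      using rot_eq[of "d - y" "y + d" "- y"] xy 1 x by simp
    ultimately show ?thesis by simp
  next
    case 2
    then have "rot (x, y) = (y - d, y + d)"
      by (simp add: rot_eq[OF x])
    moreover have "rot (y - d, y + d) = (x, y)"
      using rot_eq[of "y - d" "y + d" "- d"] xy 2 x by simp
    ultimately show ?thesis by simp
  next
    case 3
    then have "rot (x, y) = (2 * y + d, d)"
      by (simp add: rot_eq[OF x])
    moreover have "rot (2 * y + d, d) = (x, y)"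
      using rot_eq[of "2 * y + d" d y] xy 3 x by simp
    ultimately show ?thesis by simp
  next
    case 4
    then have "rot (x, y) = (2 * y + d, - d)"
      by (simp add: rot_eq[OF x])
    moreover have "rot (2 * y + d, - d) = (x, y)"
      using rot_eq[of "2 * y + d" "- d" "y + d"] xy 4 x by simp
    ultimately show ?thesis by simp
  qed
qed

lemma rot_fixed_iff:
  assumes "(x, y) \<in> odd_reps M"
  shows "rot (x, y) = (x, y) \<longleftrightarrow> x = y \<or> x = 3 * y"
proof -
  obtain d where x: "x = y + 2 * d" and xy: "0 < x" "0 < y" "odd x" "odd y"
    using assms by (rule odd_repsE)
  show ?thesis
    unfolding rot_eq[OF x] using xy x by (cases "even d") auto
qed

lemma card_odd_reps_mod_2:
  "(of_nat (card (odd_reps M)) :: bit) = of_nat (card {(x, y) \<in> odd_reps M. x = y \<or> x = 3 * y})"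
proof -
  define F where "F = {(x, y) \<in> odd_reps M. x = y \<or> x = 3 * y}"
  define X where "X = odd_reps M - F"
  have fixed: "rot p = p \<longleftrightarrow> p \<in> F" if "p \<in> odd_reps M" for p
    using that rot_fixed_iff[of "fst p" "snd p" M] by (auto simp: F_def)
  have rot_X: "rot p \<in> X \<and> rot (rot p) = p \<and> rot p \<noteq> p" if "p \<in> X" for p
  proof -
    have p: "p \<in> odd_reps M" "p \<notin> F"
      using that by (auto simp: X_def)
    then have "rot p \<in> odd_reps M" "rot (rot p) = p"
      using rot_mem_odd_reps[of "fst p" "snd p" M] rot_rot[of "fst p" "snd p" M] by simp_all
    moreover have "rot p \<notin> F"
      using fixed[of "rot p"] p calculation by auto
    ultimately show ?thesis
      using p fixed by (auto simp: X_def)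
  qed
  have "(\<Sum>p\<in>X. 1 :: bit) = 0"
    by (rule sum_involution_eq_0[where h = rot]) (use rot_X in auto)
  moreover have "card (odd_reps M) = card X + card F"
  proof -
    have "odd_reps M = X \<union> F" "X \<inter> F = {}" "finite (odd_reps M)"
      by (auto simp: X_def F_def odd_reps_finite)
    then show ?thesis
      by (metis card_Un_disjoint finite_Un)
  qed
  ultimately show ?thesis
    by (simp add: F_def)
qed

definition tri_pairs :: "nat \<Rightarrow> (nat \<times> nat) set" where
  "tri_pairs n = {(t, s). tri t + 3 * tri s = n}"

lemma psi_mult_psi_X3_nth: "(psi * (psi oo fps_X ^ 3)) $ n = of_nat (card (tri_pairs n))"
proof -
  let ?A = "(\<lambda>(t, s). tri t) ` tri_pairs n"
  have "(psi * (psi oo fps_X ^ 3)) $ n = (\<Sum>i\<in>{0..n}. if i \<in> ?A then 1 else 0)"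
    unfolding fps_mult_nth
  proof (intro sum.cong refl)
    fix i assume "i \<in> {0..n}"
    have "i \<in> ?A \<longleftrightarrow> (\<exists>t s. i = tri t \<and> tri t + 3 * tri s = n)"
      unfolding tri_pairs_def by auto
    also have "\<dots> \<longleftrightarrow> (\<exists>t s. i = tri t \<and> n - i = 3 * tri s)"
      using \<open>i \<in> {0..n}\<close> by (intro ex_cong1 conj_cong refl) auto
    also have "\<dots> \<longleftrightarrow> (\<exists>t. i = tri t) \<and> 3 dvd n - i \<and> (\<exists>s. (n - i) div 3 = tri s)"
      by (auto elim!: dvdE)
    finally show "psi $ i * (psi oo fps_X ^ 3) $ (n - i) = (if i \<in> ?A then 1 else 0)"
      by (simp add: psi_nth fps_nth_compose_X_power)
  qed
  also have "\<dots> = of_nat (card ?A)"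
  proof -
    have "(\<Sum>i\<in>{0..n}. if i \<in> ?A then 1 else 0 :: bit) = (\<Sum>i\<in>{i \<in> {0..n}. i \<in> ?A}. 1)"
      by (rule sum.inter_filter [symmetric]) simp
    also have "{i \<in> {0..n}. i \<in> ?A} = ?A"
      by (auto simp: tri_pairs_def)
    finally show ?thesis
      by (simp only: sum_constant mult_1_right)
  qed
  also have "card ?A = card (tri_pairs n)"
    by (rule card_image) (auto simp: inj_on_def tri_pairs_def dest: injD[OF inj_tri])
  finally show ?thesis .
qed

lemma odd_pos_intE:
  fixes x :: int
  assumes "odd x" "0 < x"
  obtains t where "x = 2 * int t + 1"
proof -
  obtain a where "x = 2 * a + 1"
    using assms(1) by (rule oddE)
  with assms(2) have "x = 2 * int (nat a) + 1"
    by simp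
  then show ?thesis
    by (rule that)
qed

lemma card_tri_pairs: "card (tri_pairs n) = card (odd_reps (2 * int n + 1))"
proof (rule bij_betw_same_card)
  let ?f = "\<lambda>(t, s). (2 * int t + 1, 2 * int s + 1)"
  have mem_iff: "(t, s) \<in> tri_pairs n \<longleftrightarrow> ?f (t, s) \<in> odd_reps (2 * int n + 1)" for t s
  proof -
    have "(2 * int t + 1) * (2 * int t + 1) + 3 * ((2 * int s + 1) * (2 * int s + 1))
        = 4 * (2 * (int (tri t) + 3 * int (tri s)) + 1)"
      unfolding eight_tri_plus_1[symmetric] by (simp add: algebra_simps)
    then show ?thesis
      by (auto simp: tri_pairs_def odd_reps_def simp flip: of_nat_eq_iff)
  qed
  moreover have "(x, y) \<in> ?f ` tri_pairs n" if "(x, y) \<in> odd_reps (2 * int n + 1)" for x y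
  proof -
    have "0 < x" "0 < y" "odd x" "odd y"
      using that by (auto simp: odd_reps_def)
    then obtain t s where "x = 2 * int t + 1" "y = 2 * int s + 1"
      by (metis odd_pos_intE)
    then have xy: "(x, y) = ?f (t, s)"
      by simp
    then have "(t, s) \<in> tri_pairs n"
      using mem_iff[of t s] that by simp
    then show ?thesis
      using xy by (rule rev_image_eqI)
  qed
  ultimately show "bij_betw ?f (tri_pairs n) (odd_reps (2 * int n + 1))"
    by (auto simp: bij_betw_def inj_on_def)
qed

lemma card_tri_eq:
  assumes "0 < c"
  shows "card {t. n = c * tri t + e} = (if \<exists>t. n = c * tri t + e then 1 else 0)"
proof (cases "\<exists>t. n = c * tri t + e")
  case True
  then obtain t0 where t0: "n = c * tri t0 + e"
    by blast
  then have "{t. n = c * tri t + e} = {t0}"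
    using assms by (auto dest: injD[OF inj_tri])
  then show ?thesis
    using True by simp
qed simp

lemma diagonal_mem_odd_reps_iff:
  "(x, x) \<in> odd_reps (2 * int n + 1) \<longleftrightarrow> (\<exists>t. x = 2 * int t + 1 \<and> n = 4 * tri t)"
proof
  assume x: "(x, x) \<in> odd_reps (2 * int n + 1)"
  then obtain t where t: "x = 2 * int t + 1"
    by (auto simp: odd_reps_def elim: odd_pos_intE)
  have "x * x = 2 * int n + 1"
    using x by (simp add: odd_reps_def)
  then have "int n = int (4 * tri t)"
    unfolding t eight_tri_plus_1 [symmetric] by simp
  then show "\<exists>t. x = 2 * int t + 1 \<and> n = 4 * tri t"
    using t by (simp only: of_nat_eq_iff) blast
next
  assume "\<exists>t. x = 2 * int t + 1 \<and> n = 4 * tri t"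
  then show "(x, x) \<in> odd_reps (2 * int n + 1)"
    by (auto simp: odd_reps_def eight_tri_plus_1 [symmetric])
qed

lemma triple_mem_odd_reps_iff:
  "(3 * y, y) \<in> odd_reps (2 * int n + 1) \<longleftrightarrow> (\<exists>t. y = 2 * int t + 1 \<and> n = 12 * tri t + 1)"
proof -
  have "3 * y * (3 * y) + 3 * (y * y) = 4 * (3 * (y * y))"
    by simp
  then have "(3 * y, y) \<in> odd_reps (2 * int n + 1) \<longleftrightarrow> 0 < y \<and> odd y \<and> 3 * (y * y) = 2 * int n + 1"
    by (auto simp: odd_reps_def)
  also have "\<dots> \<longleftrightarrow> (\<exists>t. y = 2 * int t + 1 \<and> n = 12 * tri t + 1)"
  proof
    assume y: "0 < y \<and> odd y \<and> 3 * (y * y) = 2 * int n + 1"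
    then obtain t where t: "y = 2 * int t + 1"
      by (auto elim: odd_pos_intE)
    have "int n = int (12 * tri t + 1)"
      using y unfolding t eight_tri_plus_1 [symmetric] by simp
    then show "\<exists>t. y = 2 * int t + 1 \<and> n = 12 * tri t + 1"
      using t by (simp only: of_nat_eq_iff) blast
  qed (auto simp: eight_tri_plus_1 [symmetric])
  finally show ?thesis .
qed

lemma card_odd_reps_fixed:
  "card {(x, y) \<in> odd_reps (2 * int n + 1). x = y \<or> x = 3 * y}
    = card {t. n = 4 * tri t} + card {t. n = 12 * tri t + 1}"
proof -
  let ?g1 = "\<lambda>t. (2 * int t + 1, 2 * int t + 1)" and ?g3 = "\<lambda>t. (3 * (2 * int t + 1), 2 * int t + 1)"
  have "{(x, y) \<in> odd_reps (2 * int n + 1). x = y \<or> x = 3 * y}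
      = ?g1 ` {t. n = 4 * tri t} \<union> ?g3 ` {t. n = 12 * tri t + 1}"
    using diagonal_mem_odd_reps_iff triple_mem_odd_reps_iff by fastforce
  moreover have "?g1 ` {t. n = 4 * tri t} \<inter> ?g3 ` {t. n = 12 * tri t + 1} = {}"
    by auto
  moreover have fin: "finite {t. n = c * tri t + e}" if "0 < c" for c e
    using card_tri_eq[OF that, of n e] by (cases "\<exists>t. n = c * tri t + e") (auto intro: card_ge_0_finite)
  ultimately show ?thesis
    using fin[of 4 0] fin[of 12 1] by (simp add: card_Un_disjoint card_image inj_on_def)
qed

theorem psi_mult_psi_X3: "psi * (psi oo fps_X ^ 3) = (psi oo fps_X ^ 4) + fps_X * (psi oo fps_X ^ 12)"
proof (rule fps_ext)
  fix n
  have "(psi * (psi oo fps_X ^ 3)) $ n = of_nat (card {t. n = 4 * tri t}) + of_nat (card {t. n = 12 * tri t + 1})"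
    by (simp add: psi_mult_psi_X3_nth card_tri_pairs card_odd_reps_mod_2 card_odd_reps_fixed)
  also have "of_nat (card {t. n = 4 * tri t}) = (psi oo fps_X ^ 4) $ n"
    using card_tri_eq[of 4 n 0] by (auto simp: psi_nth fps_nth_compose_X_power)
  also have "of_nat (card {t. n = 12 * tri t + 1}) = (fps_X * (psi oo fps_X ^ 12)) $ n"
    using card_tri_eq[of 12 n 1] by (cases n) (auto simp: psi_nth fps_X_mult_nth fps_nth_compose_X_power)
  finally show "(psi * (psi oo fps_X ^ 3)) $ n = ((psi oo fps_X ^ 4) + fps_X * (psi oo fps_X ^ 12)) $ n"
    by simp
qed

lemma psi_X4_mult_psi_X24:
  "(psi oo fps_X ^ 4) * (psi oo fps_X ^ 24) = (psi oo fps_X ^ 12) * ((psi oo fps_X ^ 16) + fps_X ^ 4 * (psi oo fps_X ^ 48))"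
proof -
  have X4: "(fps_X ^ 4 :: bit fps) $ 0 = 0"
    by simp
  have "psi * (psi oo fps_X ^ 6) = (psi oo fps_X ^ 3) * (psi * (psi oo fps_X ^ 3))"
    using bit_fps_compose_square[of 3 psi] by (simp add: power2_eq_square mult_ac)
  also have "\<dots> = (psi oo fps_X ^ 3) * ((psi oo fps_X ^ 4) + fps_X * (psi oo fps_X ^ 12))"
    by (simp add: psi_mult_psi_X3)
  finally have "(psi * (psi oo fps_X ^ 6)) oo fps_X ^ 4
      = ((psi oo fps_X ^ 3) * ((psi oo fps_X ^ 4) + fps_X * (psi oo fps_X ^ 12))) oo fps_X ^ 4"
    by simp
  then show ?thesis
    unfolding fps_compose_mult_distrib[OF X4] fps_compose_add_distrib
    by (simp add: fps_compose_X_power_assoc)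
qed

section \<open>The product \<open>f\<^sub>3 f\<^sub>4 / (f\<^sub>1 f\<^sub>1\<^sub>2)\<close> modulo 2\<close>

definition parts34 :: "nat \<Rightarrow> nat set" where
  "parts34 N = {m \<in> {1..N}. \<not> 3 dvd m \<and> \<not> 4 dvd m}"

lemma prod_parts34:
  fixes g :: "nat \<Rightarrow> 'a::comm_monoid_mult"
  shows "prod g {1..N} * prod g {m \<in> {1..N}. 12 dvd m} =
    prod g {m \<in> {1..N}. 3 dvd m} * prod g {m \<in> {1..N}. 4 dvd m} * prod g (parts34 N)"
proof -
  let ?S3 = "{m \<in> {1..N}. 3 dvd m}" and ?S4 = "{m \<in> {1..N}. 4 dvd m}"
  have "(3 dvd m \<and> 4 dvd m) \<longleftrightarrow> 12 dvd m" for m :: nat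
    by presburger
  then have inter: "?S3 \<inter> ?S4 = {m \<in> {1..N}. 12 dvd m}"
    by auto
  have "prod g {1..N} = prod g (parts34 N) * prod g (?S3 \<union> ?S4)"
    by (subst prod.union_disjoint [symmetric]) (auto simp: parts34_def intro!: prod.cong)
  moreover have "prod g (?S3 \<union> ?S4) * prod g (?S3 \<inter> ?S4) = prod g ?S3 * prod g ?S4"
    by (rule prod.union_inter) auto
  ultimately show ?thesis
    unfolding inter by (simp add: mult_ac)
qed

lemma eq_upto_euler_compose:
  assumes "r > 0"
  shows "eq_upto N (euler oo fps_X ^ r) (\<Prod>m \<in> {m \<in> {1..N}. r dvd m}. 1 - fps_X ^ m)"
proof -
  have "eq_upto N (euler oo fps_X ^ r) ((\<Prod>j\<in>{1..N}. 1 - fps_X ^ j) oo fps_X ^ r)"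
    using assms by (intro eq_upto_compose_X_power eq_upto_sym[OF eq_upto_qpoch_euler[unfolded qpoch_def]]) auto
  also have "(\<Prod>j\<in>{1..N}. 1 - fps_X ^ j) oo fps_X ^ r = (\<Prod>j\<in>{1..N}. 1 - fps_X ^ (j * r) :: bit fps)"
    using assms by (simp add: fps_compose_prod_distrib one_minus_X_power_compose_X_power)
  also have "\<dots> = (\<Prod>m \<in> (\<lambda>j. j * r) ` {1..N}. 1 - fps_X ^ m)"
    using assms by (subst prod.reindex) (auto simp: inj_on_def)
  also have "eq_upto N \<dots> (\<Prod>m \<in> {m \<in> {1..N}. r dvd m}. 1 - fps_X ^ m)"
  proof (rule eq_upto_prod_subset)
    show "{m \<in> {1..N}. r dvd m} \<subseteq> (\<lambda>j. j * r) ` {1..N}"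
    proof
      fix m assume m: "m \<in> {m \<in> {1..N}. r dvd m}"
      then obtain j where "m = j * r"
        by (auto elim!: dvdE simp: mult.commute)
      moreover from this m assms have "1 \<le> j" "j \<le> N"
        by (auto intro: order_trans[of j "j * r"])
      ultimately show "m \<in> (\<lambda>j. j * r) ` {1..N}"
        by auto
    qed
    fix m assume "m \<in> (\<lambda>j. j * r) ` {1..N} - {m \<in> {1..N}. r dvd m}"
    then have "N < m"
      using assms by auto
    then show "eq_upto N (1 - fps_X ^ m :: bit fps) 1"
      by (rule eq_upto_1_minus_X_power)
  qed simp
  finally show ?thesis .
qed

lemma eq_upto_euler_mult_euler_X12:
  "eq_upto N (euler * (euler oo fps_X ^ 12))
     ((euler oo fps_X ^ 3) * (euler oo fps_X ^ 4) * (\<Prod>m\<in>parts34 N. 1 - fps_X ^ m))"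
proof -
  have "eq_upto N (euler * (euler oo fps_X ^ 12))
      ((\<Prod>m\<in>{1..N}. 1 - fps_X ^ m) * (\<Prod>m\<in>{m\<in>{1..N}. 12 dvd m}. 1 - fps_X ^ m))"
    by (intro eq_upto_mult eq_upto_euler_compose eq_upto_sym[OF eq_upto_qpoch_euler[unfolded qpoch_def]]) auto
  also have "\<dots> = (\<Prod>m\<in>{m\<in>{1..N}. 3 dvd m}. 1 - fps_X ^ m) * (\<Prod>m\<in>{m\<in>{1..N}. 4 dvd m}. 1 - fps_X ^ m)
      * (\<Prod>m\<in>parts34 N. 1 - fps_X ^ m)"
    by (rule prod_parts34)
  also have "eq_upto N \<dots> ((euler oo fps_X ^ 3) * (euler oo fps_X ^ 4) * (\<Prod>m\<in>parts34 N. 1 - fps_X ^ m))"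
    by (intro eq_upto_mult eq_upto_sym[OF eq_upto_euler_compose]) auto
  finally show ?thesis .
qed

text \<open>Modulo 2 a series \<open>h\<close> with \<open>h \<prod>\<^sub>m (1 - q\<^sup>m) = 1\<close>, \<open>m\<close> running over the parts not divisible by
  3 or 4, is \<open>f\<^sub>3 f\<^sub>4 / (f\<^sub>1 f\<^sub>1\<^sub>2)\<close>. Since \<open>f\<^sub>4 = f\<^sub>1\<^sup>4\<close> and \<open>f\<^sub>6 = f\<^sub>3\<^sup>2\<close> this gives
  \<open>h f\<^sub>6 f\<^sub>1\<^sub>2 = (f\<^sub>1 f\<^sub>3)\<^sup>3 = \<psi>(q) \<psi>(q\<^sup>3)\<close>.\<close>

lemma mult_euler_X6_X12:
  assumes "\<And>N. eq_upto N (h * (\<Prod>m\<in>parts34 N. 1 - fps_X ^ m)) 1"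
  shows "h * ((euler oo fps_X ^ 6) * (euler oo fps_X ^ 12)) = (psi oo fps_X ^ 4) + fps_X * (psi oo fps_X ^ 12)"
proof -
  have base: "h * euler * (euler oo fps_X ^ 12) = (euler oo fps_X ^ 3) * (euler oo fps_X ^ 4)"
  proof (rule fps_eq_if_eq_upto)
    fix N
    have "eq_upto N (h * (euler * (euler oo fps_X ^ 12)))
        (h * ((euler oo fps_X ^ 3) * (euler oo fps_X ^ 4) * (\<Prod>m\<in>parts34 N. 1 - fps_X ^ m)))"
      by (intro eq_upto_mult_left eq_upto_euler_mult_euler_X12)
    also have "\<dots> = (euler oo fps_X ^ 3) * (euler oo fps_X ^ 4) * (h * (\<Prod>m\<in>parts34 N. 1 - fps_X ^ m))"
      by (simp only: mult_ac)
    also have "eq_upto N \<dots> ((euler oo fps_X ^ 3) * (euler oo fps_X ^ 4) * 1)"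
      by (intro eq_upto_mult_left assms)
    finally show "eq_upto N (h * euler * (euler oo fps_X ^ 12)) ((euler oo fps_X ^ 3) * (euler oo fps_X ^ 4))"
      by (simp add: mult.assoc)
  qed
  have f4: "euler oo fps_X ^ 4 = euler ^ 4"
    by (rule bit_fps_power4 [symmetric])
  have f6: "euler oo fps_X ^ 6 = (euler oo fps_X ^ 3) ^ 2"
    using bit_fps_compose_square[of 3 euler] by simp
  have inv: "inverse euler * euler = 1"
    by (simp add: inverse_mult_eq_1)
  have "h * ((euler oo fps_X ^ 6) * (euler oo fps_X ^ 12))
      = (h * euler * (euler oo fps_X ^ 12)) * (euler oo fps_X ^ 6) * inverse euler"
    using inv by (simp add: mult_ac)
  also have "\<dots> = (euler * (euler oo fps_X ^ 3)) ^ 3 * (inverse euler * euler)"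
    unfolding base f4 f6 by (simp add: power_numeral_reduce mult_ac)
  also have "\<dots> = psi * (psi oo fps_X ^ 3)"
    by (simp add: inv power_mult_distrib euler_cube euler_compose_cube)
  finally show ?thesis
    by (simp add: psi_mult_psi_X3)
qed

text \<open>Multiplying \<open>E Q H\<^sup>2\<close> by \<open>W\<^sup>4 = \<psi>(q\<^sup>1\<^sup>2)\<^sup>2\<close> gives \<open>(E W) (Q W) (H W)\<^sup>2\<close>, where all three
  factors are known.\<close>

lemma parts_product_mult_psi_X12:
  fixes h W :: "bit fps"
  assumes W: "has_parity True W" "W ^ 4 = psi oo fps_X ^ 24"
    and hW: "h * W = (psi oo fps_X ^ 4) + fps_X * (psi oo fps_X ^ 12)"
  shows "fps_even_part h * fps_odd_part h * h ^ 2 * (psi oo fps_X ^ 12)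
    = fps_X * ((psi oo fps_X ^ 4) * (psi oo fps_X ^ 8))
      + fps_X ^ 3 * ((psi oo fps_X ^ 12) * ((psi oo fps_X ^ 16) + fps_X ^ 4 * (psi oo fps_X ^ 48)))"
proof -
  define P where "P k = psi oo fps_X ^ k" for k
  define C where "C = fps_even_part h * fps_odd_part h * h ^ 2"
  have P_square: "P k ^ 2 = P (2 * k)" if "k > 0" for k
    using that by (simp add: P_def bit_fps_compose_square)
  have parts: "fps_even_part h * W = P 4" "fps_odd_part h * W = fps_X * P 12"
    using fps_parts_mult_even_eq[OF W(1) hW[folded P_def]] has_parity_X_mult[of True "P 12"]
    by (simp_all add: P_def has_parity_compose_X_power)
  have "P 12 * (C * P 12) = (fps_even_part h * W) * (fps_odd_part h * W) * (h * W) ^ 2"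
    using W(2) P_square[of 12] by (simp add: C_def P_def power_mult_distrib power_numeral_reduce mult_ac)
  also have "\<dots> = P 4 * (fps_X * P 12) * (P 8 + fps_X ^ 2 * P 24)"
    unfolding parts hW P_def[symmetric] bit_fps_add_square
    by (simp add: power_mult_distrib P_square)
  also have "\<dots> = P 12 * (fps_X * (P 4 * P 8) + fps_X * fps_X ^ 2 * (P 4 * P 24))"
    by (simp add: algebra_simps)
  also have "\<dots> = P 12 * (fps_X * (P 4 * P 8) + fps_X ^ 3 * (P 12 * (P 16 + fps_X ^ 4 * P 48)))"
    unfolding P_def psi_X4_mult_psi_X24 by (simp add: power_numeral_reduce)
  finally have "P 12 * (C * P 12)
      = P 12 * (fps_X * (P 4 * P 8) + fps_X ^ 3 * (P 12 * (P 16 + fps_X ^ 4 * P 48)))" .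
  moreover have "P 12 \<noteq> 0"
  proof
    assume "P 12 = 0"
    then have "P 12 $ 0 = 0"
      by simp
    then show False
      by (simp add: P_def)
  qed
  ultimately have "C * P 12 = fps_X * (P 4 * P 8) + fps_X ^ 3 * (P 12 * (P 16 + fps_X ^ 4 * P 48))"
    by simp
  then show ?thesis
    unfolding C_def P_def .
qed

lemma parts_product_shape:
  fixes h W :: "bit fps"
  assumes "has_parity True W" "W ^ 4 = psi oo fps_X ^ 24"
    and "h * W = (psi oo fps_X ^ 4) + fps_X * (psi oo fps_X ^ 12)"
  shows "\<exists>a. fps_even_part h * fps_odd_part h * h ^ 2
    = fps_X * (a oo fps_X ^ 4) + fps_X ^ 3 * (psi oo fps_X ^ 16) + fps_X ^ 7 * (psi oo fps_X ^ 48)"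
proof -
  define P where "P k = psi oo fps_X ^ k" for k
  define C where "C = fps_even_part h * fps_odd_part h * h ^ 2"
  define a where "a = psi * P 2 * inverse (P 3)"
  have inv: "P 12 * inverse (P 12) = 1"
    by (simp add: P_def inverse_mult_eq_1')
  have "a oo fps_X ^ 4 = P 4 * P 8 * inverse (P 12)"
    by (simp add: a_def P_def fps_compose_mult_distrib fps_inverse_compose fps_compose_X_power_assoc)
  moreover have "C = C * P 12 * inverse (P 12)"
    by (simp add: mult.assoc inv)
  ultimately have "C = fps_X * (a oo fps_X ^ 4) + fps_X ^ 3 * (P 16 + fps_X ^ 4 * P 48) * (P 12 * inverse (P 12))"
    unfolding C_def P_def parts_product_mult_psi_X12[OF assms] by (simp add: algebra_simps)
  then have "C = fps_X * (a oo fps_X ^ 4) + fps_X ^ 3 * P 16 + fps_X ^ 7 * P 48"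
    unfolding inv by (simp add: algebra_simps flip: power_add)
  then show ?thesis
    unfolding C_def P_def by blast
qed

lemma parts_product_shape_nth:
  fixes a b :: "'a::comm_ring_1 fps"
  defines "S \<equiv> fps_X * (a oo fps_X ^ 4) + fps_X ^ 3 * (b oo fps_X ^ 16) + fps_X ^ 7 * (b oo fps_X ^ 48)"
  shows "S $ (16 * n + 3) = b $ n" "S $ (48 * n + 7) = b $ n"
proof -
  have S: "S = fps_X ^ 1 * (a oo fps_X ^ 4) + fps_X ^ 3 * (b oo fps_X ^ 16) + fps_X ^ 7 * (b oo fps_X ^ 48)"
    by (simp add: S_def)
  have "\<not> 4 dvd 16 * n + 3 - 1" "\<not> (7 \<le> 16 * n + 3 \<and> 48 dvd 16 * n + 3 - 7)"
    "\<not> 4 dvd 48 * n + 7 - 1" "\<not> 16 dvd 48 * n + 7 - 3"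
    by presburger+
  then show "S $ (16 * n + 3) = b $ n" "S $ (48 * n + 7) = b $ n"
    unfolding S by (auto simp: fps_X_power_mult_compose_nth fps_nth_compose_X_power)
qed

lemma has_parity_euler_X6_X12: "has_parity True ((euler oo fps_X ^ 6) * (euler oo fps_X ^ 12))"
  using has_parity_mult[OF has_parity_compose_X_power has_parity_compose_X_power, of 6 12] by simp

lemma euler_X6_X12_power4: "((euler oo fps_X ^ 6) * (euler oo fps_X ^ 12)) ^ 4 = psi oo fps_X ^ 24"
proof -
  have "((euler oo fps_X ^ 6) * (euler oo fps_X ^ 12)) ^ 4 = (euler oo fps_X ^ 24) * (euler oo fps_X ^ 48)"
    using bit_fps_compose_power4[of 6 euler] bit_fps_compose_power4[of 12 euler]
    by (simp add: power_mult_distrib)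
  also have "euler oo fps_X ^ 48 = (euler oo fps_X ^ 24) ^ 2"
    using bit_fps_compose_square[of 24 euler] by simp
  also have "(euler oo fps_X ^ 24) * \<dots> = (euler oo fps_X ^ 24) ^ 3"
    by (simp only: power2_eq_square power3_eq_cube mult.assoc)
  finally show ?thesis
    by (simp add: euler_compose_cube)
qed

section \<open>The generating function of \<open>b4_34\<close>\<close>

definition geom :: "nat \<Rightarrow> int fps" where
  "geom m = Abs_fps (\<lambda>n. if m dvd n then 1 else 0)"

lemma one_minus_X_power_mult_geom: "m > 0 \<Longrightarrow> (1 - fps_X ^ m) * geom m = 1"
proof (rule fps_ext)
  fix n assume "m > 0"
  then show "((1 - fps_X ^ m) * geom m) $ n = 1 $ n"
    by (cases "n < m") (auto simp: algebra_simps fps_X_power_mult_nth geom_def dvd_minus_self dest: dvd_imp_le)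
qed

lemma geom_mult_nth:
  assumes "m > 0"
  shows "(geom m * F) $ n = (\<Sum>k\<in>{0..n div m}. F $ (n - k * m))"
proof -
  have "(geom m * F) $ n = (\<Sum>i\<in>{0..n}. if m dvd i then F $ (n - i) else 0)"
    unfolding fps_mult_nth by (intro sum.cong) (auto simp: geom_def)
  also have "\<dots> = (\<Sum>i\<in>{i \<in> {0..n}. m dvd i}. F $ (n - i))"
    by (rule sum.inter_filter [symmetric]) simp
  also have "{i \<in> {0..n}. m dvd i} = (\<lambda>k. k * m) ` {0..n div m}"
  proof (intro equalityI subsetI)
    fix i assume "i \<in> {i \<in> {0..n}. m dvd i}"
    then obtain k where "i = k * m" "k * m \<le> n"
      by (metis atLeastAtMost_iff dvd_div_mult_self mem_Collect_eq)
    then show "i \<in> (\<lambda>k. k * m) ` {0..n div m}"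
      using assms by (auto simp: less_eq_div_iff_mult_less_eq)
  next
    fix i assume "i \<in> (\<lambda>k. k * m) ` {0..n div m}"
    then show "i \<in> {i \<in> {0..n}. m dvd i}"
      using assms by (auto simp: less_eq_div_iff_mult_less_eq)
  qed
  also have "(\<Sum>i\<in>(\<lambda>k. k * m) ` {0..n div m}. F $ (n - i)) = (\<Sum>k\<in>{0..n div m}. F $ (n - k * m))"
    using assms by (subst sum.reindex) (auto simp: inj_on_def)
  finally show ?thesis .
qed

definition weighted_msets :: "'b set \<Rightarrow> ('b \<Rightarrow> nat) \<Rightarrow> nat \<Rightarrow> 'b multiset set" where
  "weighted_msets I w n = {M. set_mset M \<subseteq> I \<and> sum_mset (image_mset w M) = n}"

lemma weighted_msets_insert:
  assumes "j \<notin> I" "w j > 0"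
  shows "weighted_msets (insert j I) w n =
    (\<Union>k\<in>{0..n div w j}. (\<lambda>M. M + replicate_mset k j) ` weighted_msets I w (n - k * w j))"
proof (intro equalityI subsetI)
  fix M assume M: "M \<in> weighted_msets (insert j I) w n"
  define M' where "M' = filter_mset (\<lambda>x. x \<noteq> j) M"
  have split: "M = M' + replicate_mset (count M j) j"
    unfolding M'_def by (metis filter_eq_replicate_mset multiset_partition union_commute)
  have "sum_mset (image_mset w M) = sum_mset (image_mset w M') + count M j * w j"
    by (subst split) simp
  then have "sum_mset (image_mset w M') + count M j * w j = n"
    using M by (simp add: weighted_msets_def)
  moreover have "set_mset M' \<subseteq> I"
    using M by (auto simp: weighted_msets_def M'_def)
  ultimately have "count M j \<in> {0..n div w j}" "M' \<in> weighted_msets I w (n - count M j * w j)"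
    using assms(2) by (auto simp: weighted_msets_def less_eq_div_iff_mult_less_eq)
  then show "M \<in> (\<Union>k\<in>{0..n div w j}. (\<lambda>M. M + replicate_mset k j) ` weighted_msets I w (n - k * w j))"
    using split by blast
next
  fix M assume "M \<in> (\<Union>k\<in>{0..n div w j}. (\<lambda>M. M + replicate_mset k j) ` weighted_msets I w (n - k * w j))"
  then obtain k M' where "k * w j \<le> n" "M' \<in> weighted_msets I w (n - k * w j)" "M = M' + replicate_mset k j"
    using assms(2) by (auto simp: less_eq_div_iff_mult_less_eq)
  then show "M \<in> weighted_msets (insert j I) w n"
    by (auto simp: weighted_msets_def)
qed

lemma card_weighted_msets:
  assumes "finite I" "\<And>i. i \<in> I \<Longrightarrow> w i > 0"
  shows "finite (weighted_msets I w n) \<and> int (card (weighted_msets I w n)) = (\<Prod>i\<in>I. geom (w i)) $ n"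
  using assms
proof (induction I arbitrary: n rule: finite_induct)
  case empty
  have "weighted_msets {} w n = (if n = 0 then {{#}} else {})"
    by (auto simp: weighted_msets_def)
  then show ?case
    by simp
next
  case (insert j I)
  let ?A = "\<lambda>k. (\<lambda>M. M + replicate_mset k j) ` weighted_msets I w (n - k * w j)"
  have IH: "finite (weighted_msets I w m)" "int (card (weighted_msets I w m)) = (\<Prod>i\<in>I. geom (w i)) $ m" for m
    using insert by simp_all
  have wj: "w j > 0"
    using insert by simp
  have count: "count M j = k" if "M \<in> ?A k" for M k
    using that insert(2) by (auto simp: weighted_msets_def count_eq_zero_iff)
  have disjoint: "?A k \<inter> ?A k' = {}" if "k \<noteq> k'" for k k'
  proof -
    have "k = k'" if "M \<in> ?A k" "M \<in> ?A k'" for M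
      using count[OF that(1)] count[OF that(2)] by simp
    then show ?thesis
      using \<open>k \<noteq> k'\<close> by blast
  qed
  have "card (weighted_msets (insert j I) w n) = (\<Sum>k\<in>{0..n div w j}. card (?A k))"
    unfolding weighted_msets_insert[of j I w, OF insert(2) wj]
    by (rule card_UN_disjoint) (use IH(1) disjoint in auto)
  also have "\<dots> = (\<Sum>k\<in>{0..n div w j}. card (weighted_msets I w (n - k * w j)))"
    by (intro sum.cong refl card_image) (auto simp: inj_on_def)
  finally have "int (card (weighted_msets (insert j I) w n))
      = (\<Sum>k\<in>{0..n div w j}. (\<Prod>i\<in>I. geom (w i)) $ (n - k * w j))"
    by (simp add: IH(2))
  also have "\<dots> = (\<Prod>i\<in>insert j I. geom (w i)) $ n"
    using insert by (simp add: geom_mult_nth)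
  finally show ?case
    using IH(1) by (simp add: weighted_msets_insert[of j I w, OF insert(2) wj])
qed

lemma b4_34_weighted_msets: "b4_34 n = card (weighted_msets (parts34 n \<times> {0..<4::nat}) fst n)"
proof -
  have le: "fst x \<le> sum_mset (image_mset fst M)" if x: "x \<in># M" for x :: "nat \<times> nat" and M
  proof -
    obtain M' where "M = add_mset x M'"
      using multi_member_split[OF x] by blast
    then show ?thesis
      by simp
  qed
  have "{M. (\<forall>x \<in># M. 0 < fst x \<and> \<not> 3 dvd fst x \<and> \<not> 4 dvd fst x \<and> snd x < 4) \<and>
      sum_mset (image_mset fst M) = n} = weighted_msets (parts34 n \<times> {0..<4::nat}) fst n"
  proof (intro set_eqI iffI)
    fix M :: "(nat \<times> nat) multiset"
    assume M: "M \<in> {M. (\<forall>x \<in># M. 0 < fst x \<and> \<not> 3 dvd fst x \<and> \<not> 4 dvd fst x \<and> snd x < 4) \<and>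
      sum_mset (image_mset fst M) = n}"
    have "x \<in> parts34 n \<times> {0..<4}" if "x \<in># M" for x
      using M le[OF that] that by (cases x) (auto simp: parts34_def)
    then show "M \<in> weighted_msets (parts34 n \<times> {0..<4::nat}) fst n"
      using M by (auto simp: weighted_msets_def)
  next
    fix M :: "(nat \<times> nat) multiset"
    assume "M \<in> weighted_msets (parts34 n \<times> {0..<4::nat}) fst n"
    then show "M \<in> {M. (\<forall>x \<in># M. 0 < fst x \<and> \<not> 3 dvd fst x \<and> \<not> 4 dvd fst x \<and> snd x < 4) \<and>
      sum_mset (image_mset fst M) = n}"
      by (auto simp: weighted_msets_def parts34_def)
  qed
  then show ?thesis
    by (simp add: b4_34_def)
qed

lemma b4_34_eq_nth_prod: "int (b4_34 n) = ((\<Prod>m\<in>parts34 n. geom m) ^ 4) $ n"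
proof -
  have "int (b4_34 n) = (\<Prod>i\<in>parts34 n \<times> {0..<4::nat}. geom (fst i)) $ n"
    unfolding b4_34_weighted_msets by (subst card_weighted_msets) (auto simp: parts34_def)
  also have "(\<Prod>i\<in>parts34 n \<times> {0..<4::nat}. geom (fst i)) = (\<Prod>m\<in>parts34 n. \<Prod>c\<in>{0..<4::nat}. geom m)"
    by (subst prod.cartesian_product) (simp add: case_prod_beta)
  finally show ?thesis
    by (simp add: prod_power_distrib)
qed

definition gen34 :: "int fps" where
  "gen34 = fps_infprod (\<lambda>m. if \<not> 3 dvd m \<and> \<not> 4 dvd m then geom m else 1)"

lemma eq_upto_gen34: "eq_upto N gen34 (\<Prod>m\<in>parts34 N. geom m)"
proof -
  have "eq_upto N gen34 (\<Prod>m\<in>{1..N}. if \<not> 3 dvd m \<and> \<not> 4 dvd m then geom m else 1)"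
    unfolding gen34_def by (rule eq_upto_fps_infprod) (auto simp: eq_upto_def geom_def dest: dvd_imp_le)
  also have "(\<Prod>m\<in>{1..N}. if \<not> 3 dvd m \<and> \<not> 4 dvd m then geom m else 1) = (\<Prod>m\<in>parts34 N. geom m)"
    unfolding parts34_def by (rule prod.inter_filter [symmetric]) simp
  finally show ?thesis .
qed

lemma b4_34_eq_nth: "int (b4_34 n) = (gen34 ^ 4) $ n"
  using eq_upto_power[OF eq_upto_gen34[of n], of 4] by (simp add: b4_34_eq_nth_prod eq_upto_def)

lemma eq_upto_fps_of_int_gen34:
  "eq_upto N ((fps_of_int gen34 :: 'a::comm_ring_1 fps) * (\<Prod>m\<in>parts34 N. 1 - fps_X ^ m)) 1"
proof -
  have "eq_upto N (gen34 * (\<Prod>m\<in>parts34 N. 1 - fps_X ^ m)) ((\<Prod>m\<in>parts34 N. geom m) * (\<Prod>m\<in>parts34 N. 1 - fps_X ^ m))"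
    by (intro eq_upto_mult eq_upto_gen34 eq_upto_refl)
  also have "(\<Prod>m\<in>parts34 N. geom m) * (\<Prod>m\<in>parts34 N. 1 - fps_X ^ m)
      = (\<Prod>m\<in>parts34 N. (1 - fps_X ^ m) * geom m)"
    by (simp add: prod.distrib mult.commute)
  also have "\<dots> = 1"
    by (intro prod.neutral ballI one_minus_X_power_mult_geom) (auto simp: parts34_def)
  finally have "eq_upto N (fps_of_int (gen34 * (\<Prod>m\<in>parts34 N. 1 - fps_X ^ m)) :: 'a fps) (fps_of_int 1)"
    by (rule eq_upto_fps_of_int)
  then show ?thesis
    by (simp add: fps_of_int_mult fps_of_int_prod fps_of_int_diff fps_of_int_1 fps_of_int_X_power)
qed

section \<open>From modulo 2 to modulo 8\<close>

text \<open>Write \<open>H = E + Q\<close> with \<open>E\<close>, \<open>Q\<close> the even and odd parts. In odd degrees only the terms of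
  \<open>(E + Q)\<^sup>4\<close> with an odd power of \<open>Q\<close> survive, and these are \<open>4 (E\<^sup>3 Q + E Q\<^sup>3)\<close>;
  modulo 2, \<open>E\<^sup>3 Q + E Q\<^sup>3 = E Q (E + Q)\<^sup>2\<close>.\<close>

lemma fourth_power_odd_nth:
  fixes H :: "'a::comm_ring_1 fps"
  defines "E \<equiv> fps_even_part H" and "Q \<equiv> fps_odd_part H"
  assumes "odd n"
  shows "(H ^ 4) $ n = 4 * (E ^ 3 * Q + E * Q ^ 3) $ n"
proof -
  have "has_parity True (E * E)" "has_parity True (Q * Q)"
    using has_parity_mult[of True E True E] has_parity_mult[of False Q False Q]
    by (simp_all add: E_def Q_def has_parity_even_part has_parity_odd_part)
  then have "has_parity True ((E * E) * (E * E))" "has_parity True ((E * E) * (Q * Q))"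
    "has_parity True ((Q * Q) * (Q * Q))"
    using has_parity_mult by fastforce+
  then have "(E ^ 4) $ n = 0" "(E ^ 2 * Q ^ 2) $ n = 0" "(Q ^ 4) $ n = 0"
    using assms(3) by (auto simp: has_parity_def power_numeral_reduce power2_eq_square mult_ac)
  moreover have "H ^ 4 = E ^ 4 + 6 * (E ^ 2 * Q ^ 2) + Q ^ 4 + 4 * (E ^ 3 * Q + E * Q ^ 3)"
    unfolding E_def Q_def
    by (subst (1) fps_even_part_plus_odd_part [symmetric]) (simp add: power_numeral_reduce algebra_simps)
  ultimately show ?thesis
    by (simp add: numeral_fps_const)
qed

lemma fps_of_int_cross_terms:
  fixes H :: "int fps"
  defines "h \<equiv> fps_of_int H :: bit fps"
  shows "fps_of_int (fps_even_part H ^ 3 * fps_odd_part H + fps_even_part H * fps_odd_part H ^ 3)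
    = fps_even_part h * fps_odd_part h * h ^ 2"
proof -
  define e q where "e = fps_even_part h" and "q = fps_odd_part h"
  have "fps_of_int (fps_even_part H ^ 3 * fps_odd_part H + fps_even_part H * fps_odd_part H ^ 3)
      = e * q * (e ^ 2 + q ^ 2)"
    by (simp add: e_def q_def h_def fps_of_int_add fps_of_int_mult fps_of_int_power fps_of_int_even_part
        fps_of_int_odd_part power_numeral_reduce algebra_simps)
  also have "e ^ 2 + q ^ 2 = h ^ 2"
    by (simp add: e_def q_def bit_fps_add_square [symmetric] fps_even_part_plus_odd_part)
  finally show ?thesis
    by (simp add: e_def q_def)
qed

lemma b4_34_mod_8:
  defines "h \<equiv> fps_of_int gen34 :: bit fps"
  assumes "odd m" "(fps_even_part h * fps_odd_part h * h ^ 2) $ m = 0"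
  shows "b4_34 m mod 8 = 0"
proof -
  define c where "c = (fps_even_part gen34 ^ 3 * fps_odd_part gen34 + fps_even_part gen34 * fps_odd_part gen34 ^ 3) $ m"
  have "int (b4_34 m) = 4 * c"
    unfolding c_def b4_34_eq_nth by (rule fourth_power_odd_nth[OF assms(2)])
  moreover have "even c"
    using assms(3) arg_cong[OF fps_of_int_cross_terms[of gen34], of "\<lambda>a. a $ m"]
    by (simp add: c_def h_def bit_of_int_eq_0_iff)
  ultimately have "int (b4_34 m) mod 8 = 0"
    by (auto elim!: evenE)
  then show ?thesis
    by presburger
qed

section \<open>Triangular numbers are of the form \<open>P\<^sub>1 + 2 P\<^sub>2\<close>\<close>

text \<open>Multiplying by \<open>(1 \<plusminus> 2\<surd>-2)\<close>, which has norm 9, moves a representation \<open>X\<^sup>2 + 2Y\<^sup>2\<close> of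
  \<open>3m\<^sup>2\<close> to one of \<open>3(3m)\<^sup>2\<close>; one of the two signs keeps both coordinates prime to 3.\<close>

lemma three_square_eq_sq_plus_2sq:
  assumes "m \<ge> 1"
  shows "\<exists>X Y :: int. X * X + 2 * (Y * Y) = 3 * (int m * int m) \<and> \<not> 3 dvd X \<and> \<not> 3 dvd Y"
  using assms
proof (induction m rule: less_induct)
  case (less m)
  show ?case
  proof (cases "3 dvd m")
    case False
    then have "\<not> 3 dvd int m"
      by presburger
    then show ?thesis
      by (intro exI[of _ "int m"]) simp
  next
    case True
    then obtain m' where m': "m = 3 * m'"
      by (auto elim: dvdE)
    with less.prems obtain X Y :: int where XY: "X * X + 2 * (Y * Y) = 3 * (int m' * int m')"
      "\<not> 3 dvd X" "\<not> 3 dvd Y"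
      using less.IH[of m'] by auto
    have m_sq: "3 * (int m * int m) = 9 * (X * X + 2 * (Y * Y))"
      using m' XY(1) by simp
    show ?thesis
    proof (cases "3 dvd X + Y")
      case False
      then have "\<not> 3 dvd X + 4 * Y" "\<not> 3 dvd 2 * X - Y"
        by presburger+
      moreover have "(X + 4 * Y) * (X + 4 * Y) + 2 * ((2 * X - Y) * (2 * X - Y)) = 9 * (X * X + 2 * (Y * Y))"
        by (simp add: algebra_simps)
      ultimately show ?thesis
        unfolding m_sq by blast
    next
      case True
      then have "\<not> 3 dvd X - 4 * Y" "\<not> 3 dvd 2 * X + Y"
        using XY(2) by presburger+
      moreover have "(X - 4 * Y) * (X - 4 * Y) + 2 * ((2 * X + Y) * (2 * X + Y)) = 9 * (X * X + 2 * (Y * Y))"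
        by (simp add: algebra_simps)
      ultimately show ?thesis
        unfolding m_sq by blast
    qed
  qed
qed

lemma pentagonal_of_square:
  assumes "odd X" "\<not> 3 dvd X"
  shows "\<exists>P. pentagonal P \<and> 24 * P = X * X - 1"
proof -
  obtain k :: int where k: "X = 6 * k - 1 \<or> X = 1 - 6 * k"
  proof (cases "X mod 6 = 5")
    case True
    then have "X = 6 * ((X + 1) div 6) - 1"
      by presburger
    then show ?thesis
      by (rule that[OF disjI1])
  next
    case False
    then have "X = 1 - 6 * ((1 - X) div 6)"
      using assms by presburger
    then show ?thesis
      by (rule that[OF disjI2])
  qed
  have sq: "X * X = (6 * k - 1) * (6 * k - 1)"
  proof (cases "X = 6 * k - 1")
    case False
    then have "X = 1 - 6 * k"
      using k by simp
    moreover have "(1 - 6 * k) * (1 - 6 * k) = (6 * k - 1) * (6 * k - 1)"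
      by (simp add: algebra_simps)
    ultimately show ?thesis
      by simp
  qed simp
  have "even (k * (3 * k - 1))"
    by presburger
  then obtain j where j: "k * (3 * k - 1) = 2 * j"
    by (rule evenE)
  have "X * X - 1 = 12 * (k * (3 * k - 1))"
    unfolding sq by (simp add: algebra_simps)
  then have "24 * (k * (3 * k - 1) div 2) = X * X - 1"
    unfolding j by simp
  then show ?thesis
    unfolding pentagonal_def by blast
qed

lemma tri_eq_pentagonal_plus_2_pentagonal:
  "\<exists>P1 P2. pentagonal P1 \<and> pentagonal P2 \<and> int (tri t) = P1 + 2 * P2"
proof -
  obtain X Y :: int where XY: "X * X + 2 * (Y * Y) = 3 * (int (2 * t + 1) * int (2 * t + 1))"
    "\<not> 3 dvd X" "\<not> 3 dvd Y"
    using three_square_eq_sq_plus_2sq[of "2 * t + 1"] by (metis le_add2)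
  have "odd X"
  proof
    assume "even X"
    then have "even (X * X + 2 * (Y * Y))"
      by simp
    then show False
      unfolding XY(1) by simp
  qed
  have "odd Y"
  proof
    assume "even Y"
    then obtain c where c: "Y = 2 * c"
      by (rule evenE)
    obtain a where a: "X = 2 * a + 1"
      using \<open>odd X\<close> by (rule oddE)
    define u v where "u = a * a + a + 2 * (c * c)" and "v = 3 * (int t * int t + int t)"
    have "4 * u = 2 + 4 * v"
      using XY(1) unfolding a c u_def v_def by (simp add: algebra_simps)
    then show False
      by presburger
  qed
  obtain P1 P2 where P: "pentagonal P1" "24 * P1 = X * X - 1" "pentagonal P2" "24 * P2 = Y * Y - 1"
    using pentagonal_of_square[OF \<open>odd X\<close> XY(2)] pentagonal_of_square[OF \<open>odd Y\<close> XY(3)] by blast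
  have "X * X + 2 * (Y * Y) = 3 * (8 * int (tri t) + 1)"
    unfolding XY(1) eight_tri_plus_1 by (simp add: algebra_simps)
  then have "int (tri t) = P1 + 2 * P2"
    using P(2,4) by (smt (verit))
  then show ?thesis
    using P(1,3) by blast
qed

theorem mainTheorem8:
  fixes n :: nat
  assumes "\<not> (\<exists>P1 P2. pentagonal P1 \<and> pentagonal P2 \<and> int n = P1 + 2 * P2)"
  shows "b4_34 (16 * n + 3) mod 8 = 0 \<and> b4_34 (48 * n + 7) mod 8 = 0"
proof -
  define h where "h = (fps_of_int gen34 :: bit fps)"
  have "h * ((euler oo fps_X ^ 6) * (euler oo fps_X ^ 12)) = (psi oo fps_X ^ 4) + fps_X * (psi oo fps_X ^ 12)"
    unfolding h_def by (rule mult_euler_X6_X12[OF eq_upto_fps_of_int_gen34])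
  then obtain a where C: "fps_even_part h * fps_odd_part h * h ^ 2
      = fps_X * (a oo fps_X ^ 4) + fps_X ^ 3 * (psi oo fps_X ^ 16) + fps_X ^ 7 * (psi oo fps_X ^ 48)"
    using parts_product_shape[OF has_parity_euler_X6_X12 euler_X6_X12_power4] by blast
  have "n \<noteq> tri t" for t
    using assms tri_eq_pentagonal_plus_2_pentagonal[of t] by auto
  then have "psi $ n = 0"
    by (simp add: psi_nth)
  then have "(fps_even_part h * fps_odd_part h * h ^ 2) $ (16 * n + 3) = 0"
    "(fps_even_part h * fps_odd_part h * h ^ 2) $ (48 * n + 7) = 0"
    unfolding C parts_product_shape_nth by simp_all
  then show ?thesis
    unfolding h_def by (intro conjI b4_34_mod_8) simp_all
qed

end
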